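(* Let $G,H,H'$ be graphs with $V(G)=V(H)=V(H')=\{1,\ldots,n\}$ and $E(G)\subseteq E(H)\subseteq E(H')$, and let $A\in\mathcal{S}(G)$ have the strong spectral property with respect to $H$. Then for every $\epsilon>0$ there is a matrix $A'\in\mathcal{S}^{\rm cl}(H')$ such that $\operatorname{spec}(A')=\operatorname{spec}(A)$, $\|A-A'\|<\epsilon$, $A'$ has the strong spectral property with respect to $H'$, and every entry $a'_{ij}$ of $A'$ with $\{i,j\}\in E(H')\setminus E(H)$ is nonzero.
   Context: For a graph $G$ on $\{1,\ldots,n\}$, $\mathcal{S}(G)$ is the set of $n\times n$ real symmetric matrices $A=(a_{ij})$ with, for $i\neq j$, $a_{ij}\neq0$ iff $\{i,j\}\in E(G)$; $\mathcal{S}^{\rm cl}(G)$ is the set of $n\times n$ real symmetric matrices whose $(i,j)$-entry, $i\neq j$, is nonzero only if $\{i,j\}\in E(G)$ (its closure). $\overline{H}$ denotes the complement graph of $H$. If $A\in\mathcal{S}(G)$ and $H$ is a graph on the same vertex set with $E(G)\subseteq E(H)$, then $A$ has the strong spectral property with respect to $H$ if the only real symmetric matrix $X$ with $X\in\mathcal{S}^{\rm cl}(\overline{H})$, $I\circ X=O$ and $AX-XA=O$ is $X=O$ ($\circ$ the entrywise product). $\|\cdot\|$ is any fixed norm on $n\times n$ matrices. *)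

theory Defs
  imports "Jordan_Normal_Form.Jordan_Normal_Form"
begin

(* Graphs on the vertex set {0..<n} (the paper's {1..n}, shifted by one) are
   given by an edge predicate E :: nat => nat => bool; {i,j} is an edge iff E i j. *)
definition graph_on :: "nat \<Rightarrow> (nat \<Rightarrow> nat \<Rightarrow> bool) \<Rightarrow> bool" where
  "graph_on n E \<longleftrightarrow> (\<forall>i j. E i j \<longrightarrow> i < n \<and> j < n \<and> i \<noteq> j \<and> E j i)"

definition edge_subset :: "(nat \<Rightarrow> nat \<Rightarrow> bool) \<Rightarrow> (nat \<Rightarrow> nat \<Rightarrow> bool) \<Rightarrow> bool" where
  "edge_subset E F \<longleftrightarrow> (\<forall>i j. E i j \<longrightarrow> F i j)"

definition compl_graph :: "nat \<Rightarrow> (nat \<Rightarrow> nat \<Rightarrow> bool) \<Rightarrow> nat \<Rightarrow> nat \<Rightarrow> bool" where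
  "compl_graph n E i j \<longleftrightarrow> i < n \<and> j < n \<and> i \<noteq> j \<and> \<not> E i j"

definition sym_mats :: "nat \<Rightarrow> real mat set" where
  "sym_mats n = {A. A \<in> carrier_mat n n \<and> transpose_mat A = A}"

definition S_pattern :: "nat \<Rightarrow> (nat \<Rightarrow> nat \<Rightarrow> bool) \<Rightarrow> real mat set" where
  "S_pattern n E = {A \<in> sym_mats n. \<forall>i<n. \<forall>j<n. i \<noteq> j \<longrightarrow> (A $$ (i,j) \<noteq> 0 \<longleftrightarrow> E i j)}"

definition S_cl :: "nat \<Rightarrow> (nat \<Rightarrow> nat \<Rightarrow> bool) \<Rightarrow> real mat set" where
  "S_cl n E = {A \<in> sym_mats n. \<forall>i<n. \<forall>j<n. i \<noteq> j \<longrightarrow> A $$ (i,j) \<noteq> 0 \<longrightarrow> E i j}"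

definition SSP_wrt :: "nat \<Rightarrow> real mat \<Rightarrow> (nat \<Rightarrow> nat \<Rightarrow> bool) \<Rightarrow> bool" where
  "SSP_wrt n A H \<longleftrightarrow>
     (\<forall>X. X \<in> S_cl n (compl_graph n H) \<and> (\<forall>i<n. X $$ (i,i) = 0) \<and> A * X - X * A = 0\<^sub>m n n
          \<longrightarrow> X = 0\<^sub>m n n)"

(* spectrum with multiplicities: multiplicity of x as a root of the characteristic polynomial *)
definition spec :: "real mat \<Rightarrow> real \<Rightarrow> nat" where
  "spec A = (\<lambda>x. order x (char_poly A))"

definition matrix_norm :: "nat \<Rightarrow> (real mat \<Rightarrow> real) \<Rightarrow> bool" where
  "matrix_norm n N \<longleftrightarrow>
     (\<forall>A \<in> carrier_mat n n. N A \<ge> 0 \<and> (N A = 0 \<longleftrightarrow> A = 0\<^sub>m n n)) \<and>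
     (\<forall>A \<in> carrier_mat n n. \<forall>c. N (c \<cdot>\<^sub>m A) = \<bar>c\<bar> * N A) \<and>
     (\<forall>A \<in> carrier_mat n n. \<forall>B \<in> carrier_mat n n. N (A + B) \<le> N A + N B)"

end

(* For orthogonal Q = 1 + Z consider the entries of Q A Q^T - A at the non-edges of H. Taking
   Z = [A, W] with W symmetric and supported on the non-edges of H, their linear part in W is
   ssp_operator n H A W, the restriction of [[A, W], A] to these positions. Since
   <W, [[A, W], A]> = -|[A, W]|^2 in the Frobenius inner product, this linear map is injective exactly
   when A has the strong spectral property with respect to H, and then it has a bounded inverse.
   The ansatz Z = [A, W] - Z^T Z / 2 keeps 1 + Z orthogonal, and a contraction argument in the
   entrywise l1 norm makes the entries of Q A Q^T - A at the non-edges of H equal to any prescribed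
   small symmetric Y supported there. For Y a small positive multiple of the indicator matrix of
   E(H') - E(H), the matrix A' = Q A Q^T has the spectrum of A, is close to A, lies in S^cl(H') and is
   nonzero on E(H') - E(H). It keeps the SSP with respect to H because that property is open, hence
   also has it with respect to the supergraph H'. *)
theory Submission
  imports Defs
begin

section \<open>The entrywise l1 norm\<close>

lemma mult_carrier_mat_square [simp]:
  "A \<in> carrier_mat n n \<Longrightarrow> B \<in> carrier_mat n n \<Longrightarrow> A * B \<in> carrier_mat n n"
  by (rule mult_carrier_mat)

lemma row_scalar_prod_col:
  "A \<in> carrier_mat nr k \<Longrightarrow> B \<in> carrier_mat k nc \<Longrightarrow> i < nr \<Longrightarrow> j < nc \<Longrightarrow>
   row A i \<bullet> col B j = (\<Sum>l<k. A $$ (i,l) * B $$ (l,j))"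
  by (simp add: scalar_prod_def lessThan_atLeast0)

definition entry_norm :: "real mat \<Rightarrow> real" where
  "entry_norm M = (\<Sum>i<dim_row M. \<Sum>j<dim_col M. \<bar>M $$ (i,j)\<bar>)"

lemma entry_norm_nonneg: "0 \<le> entry_norm M"
  unfolding entry_norm_def by (intro sum_nonneg) auto

lemma row_abs_sum_le_entry_norm:
  assumes "i < dim_row M"
  shows "(\<Sum>j<dim_col M. \<bar>M $$ (i,j)\<bar>) \<le> entry_norm M"
  unfolding entry_norm_def using assms
  by (intro member_le_sum[where f = "\<lambda>i. \<Sum>j<dim_col M. \<bar>M $$ (i,j)\<bar>"]) (auto intro: sum_nonneg)

lemma abs_index_le_entry_norm:
  assumes "i < dim_row M" "j < dim_col M"
  shows "\<bar>M $$ (i,j)\<bar> \<le> entry_norm M"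
proof -
  have "\<bar>M $$ (i,j)\<bar> \<le> (\<Sum>j<dim_col M. \<bar>M $$ (i,j)\<bar>)"
    using assms by (intro member_le_sum) auto
  also have "\<dots> \<le> entry_norm M"
    using assms(1) by (rule row_abs_sum_le_entry_norm)
  finally show ?thesis .
qed

lemma entry_norm_zero_mat [simp]: "entry_norm (0\<^sub>m nr nc) = 0"
  by (simp add: entry_norm_def)

lemma entry_norm_eq_0_iff:
  assumes "M \<in> carrier_mat nr nc"
  shows "entry_norm M = 0 \<longleftrightarrow> M = 0\<^sub>m nr nc"
proof
  assume "entry_norm M = 0"
  then show "M = 0\<^sub>m nr nc"
    using assms abs_index_le_entry_norm[of _ M] by (intro eq_matI) force+
qed simp

lemma entry_norm_diff_le_0_imp_eq:
  assumes "M \<in> carrier_mat nr nc" "P \<in> carrier_mat nr nc" "entry_norm (M - P) \<le> 0"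
  shows "M = P"
proof (rule eq_matI)
  fix i j assume ij: "i < dim_row P" "j < dim_col P"
  then have "\<bar>(M - P) $$ (i,j)\<bar> \<le> 0"
    using assms abs_index_le_entry_norm[of i "M - P" j] by auto
  then show "M $$ (i,j) = P $$ (i,j)"
    using assms ij by auto
qed (use assms in auto)

lemma entry_norm_add:
  "M \<in> carrier_mat nr nc \<Longrightarrow> P \<in> carrier_mat nr nc \<Longrightarrow> entry_norm (M + P) \<le> entry_norm M + entry_norm P"
  unfolding entry_norm_def by (auto simp: sum.distrib[symmetric] intro!: sum_mono abs_triangle_ineq)

lemma entry_norm_add3:
  assumes "P \<in> carrier_mat nr nc" "Q \<in> carrier_mat nr nc" "R \<in> carrier_mat nr nc"
  shows "entry_norm (P + Q + R) \<le> entry_norm P + entry_norm Q + entry_norm R"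
  using assms entry_norm_add[of P nr nc Q] entry_norm_add[of "P + Q" nr nc R] by simp

lemma entry_norm_diff:
  "M \<in> carrier_mat nr nc \<Longrightarrow> P \<in> carrier_mat nr nc \<Longrightarrow> entry_norm (M - P) \<le> entry_norm M + entry_norm P"
  unfolding entry_norm_def by (auto simp: sum.distrib[symmetric] intro!: sum_mono abs_triangle_ineq4)

lemma entry_norm_triangle:
  "M \<in> carrier_mat nr nc \<Longrightarrow> P \<in> carrier_mat nr nc \<Longrightarrow> Q \<in> carrier_mat nr nc \<Longrightarrow>
   entry_norm (M - Q) \<le> entry_norm (M - P) + entry_norm (P - Q)"
  unfolding entry_norm_def by (auto simp: sum.distrib[symmetric] intro!: sum_mono)

lemma entry_norm_le_diff:
  "M \<in> carrier_mat nr nc \<Longrightarrow> P \<in> carrier_mat nr nc \<Longrightarrow> entry_norm P \<le> entry_norm (P - M) + entry_norm M"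
  unfolding entry_norm_def by (auto simp: sum.distrib[symmetric] intro!: sum_mono)

lemma entry_norm_commute:
  "M \<in> carrier_mat nr nc \<Longrightarrow> P \<in> carrier_mat nr nc \<Longrightarrow> entry_norm (M - P) = entry_norm (P - M)"
  unfolding entry_norm_def by (auto simp: abs_minus_commute intro!: sum.cong)

lemma entry_norm_diff_self [simp]: "entry_norm (M - M) = 0"
  by (simp add: entry_norm_def)

lemma entry_norm_diff_cancel_left:
  "Y \<in> carrier_mat nr nc \<Longrightarrow> P \<in> carrier_mat nr nc \<Longrightarrow> Q \<in> carrier_mat nr nc \<Longrightarrow>
   entry_norm ((Y - P) - (Y - Q)) = entry_norm (P - Q)"
  unfolding entry_norm_def by (auto simp: abs_minus_commute intro!: sum.cong)

lemma entry_norm_add_diff: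
  "U1 \<in> carrier_mat nr nc \<Longrightarrow> U2 \<in> carrier_mat nr nc \<Longrightarrow> V1 \<in> carrier_mat nr nc \<Longrightarrow> V2 \<in> carrier_mat nr nc \<Longrightarrow>
   entry_norm ((U1 + V1) - (U2 + V2)) \<le> entry_norm (U1 - U2) + entry_norm (V1 - V2)"
  unfolding entry_norm_def by (auto simp: sum.distrib[symmetric] intro!: sum_mono)

lemma entry_norm_add3_diff:
  assumes "P1 \<in> carrier_mat nr nc" "Q1 \<in> carrier_mat nr nc" "R1 \<in> carrier_mat nr nc"
    and "P2 \<in> carrier_mat nr nc" "Q2 \<in> carrier_mat nr nc" "R2 \<in> carrier_mat nr nc"
  shows "entry_norm ((P1 + Q1 + R1) - (P2 + Q2 + R2))
    \<le> entry_norm (P1 - P2) + entry_norm (Q1 - Q2) + entry_norm (R1 - R2)"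
  unfolding entry_norm_def using assms by (auto simp: sum.distrib[symmetric] intro!: sum_mono)

lemma entry_norm_smult [simp]: "entry_norm (c \<cdot>\<^sub>m M) = \<bar>c\<bar> * entry_norm M"
  unfolding entry_norm_def by (auto simp: sum_distrib_left abs_mult intro!: sum.cong)

lemma entry_norm_smult_diff:
  "M \<in> carrier_mat nr nc \<Longrightarrow> N \<in> carrier_mat nr nc \<Longrightarrow> entry_norm (a \<cdot>\<^sub>m M - a \<cdot>\<^sub>m N) = \<bar>a\<bar> * entry_norm (M - N)"
  unfolding entry_norm_def by (auto simp: sum_distrib_left abs_mult[symmetric] algebra_simps intro!: sum.cong)

lemma entry_norm_transpose [simp]: "entry_norm (transpose_mat M) = entry_norm M"
  unfolding entry_norm_def by (simp add: sum.swap[of _ "{..<dim_col M}"])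

lemma entry_norm_mult:
  assumes "M \<in> carrier_mat nr k" "P \<in> carrier_mat k nc"
  shows "entry_norm (M * P) \<le> entry_norm M * entry_norm P"
proof -
  have "entry_norm (M * P) = (\<Sum>i<nr. \<Sum>j<nc. \<bar>\<Sum>l<k. M $$ (i,l) * P $$ (l,j)\<bar>)"
    using assms by (auto simp: entry_norm_def row_scalar_prod_col intro!: sum.cong)
  also have "\<dots> \<le> (\<Sum>i<nr. \<Sum>j<nc. \<Sum>l<k. \<bar>M $$ (i,l)\<bar> * \<bar>P $$ (l,j)\<bar>)"
    by (intro sum_mono) (auto simp: abs_mult[symmetric] intro: sum_abs[THEN order_trans])
  also have "\<dots> = (\<Sum>i<nr. \<Sum>l<k. \<bar>M $$ (i,l)\<bar> * (\<Sum>j<nc. \<bar>P $$ (l,j)\<bar>))"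
    by (simp add: sum_distrib_left sum.swap[of _ "{..<nc}"])
  also have "\<dots> \<le> (\<Sum>i<nr. \<Sum>l<k. \<bar>M $$ (i,l)\<bar> * entry_norm P)"
    using assms row_abs_sum_le_entry_norm[of _ P] by (intro sum_mono mult_left_mono) auto
  also have "\<dots> = entry_norm M * entry_norm P"
    using assms by (simp add: entry_norm_def sum_distrib_right)
  finally show ?thesis .
qed

lemma entry_norm_mult_diff:
  assumes "P1 \<in> carrier_mat nr k" "P2 \<in> carrier_mat nr k" "Q1 \<in> carrier_mat k nc" "Q2 \<in> carrier_mat k nc"
  shows "entry_norm (P1 * Q1 - P2 * Q2) \<le> entry_norm (P1 - P2) * entry_norm Q1 + entry_norm P2 * entry_norm (Q1 - Q2)"
proof -
  have "P1 * Q1 - P2 * Q2 = (P1 - P2) * Q1 + P2 * (Q1 - Q2)"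
    using assms by (simp add: minus_mult_distrib_mat mult_minus_distrib_mat) (intro eq_matI; auto)
  then have "entry_norm (P1 * Q1 - P2 * Q2) \<le> entry_norm ((P1 - P2) * Q1) + entry_norm (P2 * (Q1 - Q2))"
    using assms by (auto simp: minus_carrier_mat intro: entry_norm_add)
  also have "\<dots> \<le> entry_norm (P1 - P2) * entry_norm Q1 + entry_norm P2 * entry_norm (Q1 - Q2)"
    using assms by (intro add_mono entry_norm_mult) auto
  finally show ?thesis .
qed

lemma entry_norm_geometric_limit:
  assumes z: "\<And>k. z k \<in> carrier_mat nr nc"
    and step: "\<And>k. entry_norm (z (Suc k) - z k) \<le> q ^ k * D"
    and q: "0 \<le> q" "q < 1"
  shows "\<exists>L \<in> carrier_mat nr nc. (\<lambda>k. entry_norm (z k - L)) \<longlonglongrightarrow> 0"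
proof -
  have conv: "convergent (\<lambda>k. z k $$ (i,j))" if ij: "i < nr" "j < nc" for i j
  proof -
    have "summable (\<lambda>k. z (Suc k) $$ (i,j) - z k $$ (i,j))"
    proof (rule summable_comparison_test')
      show "summable (\<lambda>k. q ^ k * D)"
        using q by (intro summable_mult2 summable_geometric) simp
      show "norm (z (Suc k) $$ (i,j) - z k $$ (i,j)) \<le> q ^ k * D" for k
        using abs_index_le_entry_norm[of i "z (Suc k) - z k" j] step[of k] z[of k] ij by auto
    qed
    then have "convergent (\<lambda>k. (\<Sum>m<k. z (Suc m) $$ (i,j) - z m $$ (i,j)) + z 0 $$ (i,j))"
      by (intro convergent_add convergent_const) (simp add: summable_iff_convergent)
    then show ?thesis
      by (simp add: sum_lessThan_telescope[of "\<lambda>m. z m $$ (i,j)"])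
  qed
  define L where "L = mat nr nc (\<lambda>(i,j). lim (\<lambda>k. z k $$ (i,j)))"
  have "(\<lambda>k. entry_norm (z k - L)) = (\<lambda>k. \<Sum>i<nr. \<Sum>j<nc. \<bar>z k $$ (i,j) - L $$ (i,j)\<bar>)"
    using z by (auto simp: entry_norm_def L_def)
  also have "\<dots> \<longlonglongrightarrow> (\<Sum>i<nr. \<Sum>j<nc. \<bar>L $$ (i,j) - L $$ (i,j)\<bar>)"
    using conv by (intro tendsto_intros) (auto simp: L_def convergent_LIMSEQ_iff)
  finally show ?thesis
    by (auto simp: L_def)
qed

lemma contraction_orbit_limit_fixpoint:
  fixes T :: "real mat \<Rightarrow> real mat"
  assumes maps: "\<And>Z. Z \<in> carrier_mat nr nc \<Longrightarrow> entry_norm Z \<le> r \<Longrightarrow> T Z \<in> carrier_mat nr nc"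
    and contraction: "\<And>Z W. Z \<in> carrier_mat nr nc \<Longrightarrow> entry_norm Z \<le> r \<Longrightarrow>
      W \<in> carrier_mat nr nc \<Longrightarrow> entry_norm W \<le> r \<Longrightarrow> entry_norm (T Z - T W) \<le> q * entry_norm (Z - W)"
    and z: "\<And>k. z k \<in> carrier_mat nr nc \<and> entry_norm (z k) \<le> r" and z_Suc: "\<And>k. z (Suc k) = T (z k)"
    and L: "L \<in> carrier_mat nr nc" and lim: "(\<lambda>k. entry_norm (z k - L)) \<longlonglongrightarrow> 0"
  shows "entry_norm L \<le> r \<and> T L = L"
proof
  show L_ball: "entry_norm L \<le> r"
  proof (rule tendsto_le[OF trivial_limit_sequentially])
    show "(\<lambda>k. entry_norm (z k - L) + r) \<longlonglongrightarrow> r"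
      using tendsto_add[OF lim tendsto_const] by simp
    have "entry_norm L \<le> entry_norm (z k - L) + r" for k
      using entry_norm_le_diff[of "z k" nr nc L] entry_norm_commute[of L nr nc "z k"] z[of k] L
      by linarith
    then show "\<forall>\<^sub>F k in sequentially. entry_norm L \<le> entry_norm (z k - L) + r"
      by simp
  qed simp
  have TL: "T L \<in> carrier_mat nr nc"
    using maps L L_ball by blast
  have "entry_norm (T L - L) \<le> q * entry_norm (z k - L) + entry_norm (z (Suc k) - L)" for k
  proof -
    have "entry_norm (T L - L) \<le> entry_norm (T L - T (z k)) + entry_norm (z (Suc k) - L)"
      using entry_norm_triangle[OF TL _ L, of "z (Suc k)"] z[of "Suc k"] by (simp add: z_Suc)
    also have "entry_norm (T L - T (z k)) \<le> q * entry_norm (L - z k)"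
      using L L_ball z[of k] by (intro contraction) auto
    also have "entry_norm (L - z k) = entry_norm (z k - L)"
      using entry_norm_commute[of L nr nc "z k"] L z[of k] by simp
    finally show ?thesis by simp
  qed
  moreover have "(\<lambda>k. q * entry_norm (z k - L) + entry_norm (z (Suc k) - L)) \<longlonglongrightarrow> 0"
    using tendsto_add[OF tendsto_mult_right_zero[OF lim] LIMSEQ_Suc[OF lim]] by simp
  ultimately have "entry_norm (T L - L) \<le> 0"
    by (intro tendsto_le[OF trivial_limit_sequentially, of _ 0 "\<lambda>_. entry_norm (T L - L)"]) auto
  then show "T L = L"
    using TL L by (rule entry_norm_diff_le_0_imp_eq[rotated 2])
qed

(* Banach's fixed-point theorem; JNF matrices of varying size do not form a metric-space type,
   so the HOL-Analysis version does not apply. *)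
lemma contraction_fixpoint_entry_norm_ball:
  fixes T :: "real mat \<Rightarrow> real mat"
  assumes r: "0 \<le> r" and q: "0 \<le> q" "q < 1"
    and maps: "\<And>Z. Z \<in> carrier_mat nr nc \<Longrightarrow> entry_norm Z \<le> r \<Longrightarrow>
      T Z \<in> carrier_mat nr nc \<and> entry_norm (T Z) \<le> r"
    and contraction: "\<And>Z W. Z \<in> carrier_mat nr nc \<Longrightarrow> entry_norm Z \<le> r \<Longrightarrow>
      W \<in> carrier_mat nr nc \<Longrightarrow> entry_norm W \<le> r \<Longrightarrow> entry_norm (T Z - T W) \<le> q * entry_norm (Z - W)"
  shows "\<exists>Z \<in> carrier_mat nr nc. entry_norm Z \<le> r \<and> T Z = Z"
proof -
  define z where "z k = (T ^^ k) (0\<^sub>m nr nc)" for k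
  have z_Suc: "z (Suc k) = T (z k)" for k
    by (simp add: z_def)
  have z: "z k \<in> carrier_mat nr nc \<and> entry_norm (z k) \<le> r" for k
  proof (induction k)
    case 0
    then show ?case using r by (simp add: z_def)
  next
    case (Suc k)
    then show ?case unfolding z_Suc by (intro maps) auto
  qed
  have step: "entry_norm (z (Suc k) - z k) \<le> q ^ k * entry_norm (z 1 - z 0)" for k
  proof (induction k)
    case (Suc k)
    have "entry_norm (T (z (Suc k)) - T (z k)) \<le> q * entry_norm (z (Suc k) - z k)"
      using z[of k] z[of "Suc k"] by (intro contraction) auto
    then have "entry_norm (z (Suc (Suc k)) - z (Suc k)) \<le> q * entry_norm (z (Suc k) - z k)"
      by (simp only: z_Suc[symmetric])
    also have "\<dots> \<le> q * (q ^ k * entry_norm (z 1 - z 0))"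
      using Suc.IH q(1) by (rule mult_left_mono)
    finally show ?case by simp
  qed simp
  obtain L where L: "L \<in> carrier_mat nr nc" and lim: "(\<lambda>k. entry_norm (z k - L)) \<longlonglongrightarrow> 0"
    using entry_norm_geometric_limit[OF _ step q] z by blast
  then show ?thesis
    using contraction_orbit_limit_fixpoint[of nr nc r T q z L] maps contraction z z_Suc by blast
qed

section \<open>Linear endomorphisms of matrix spaces\<close>

definition mat_unit :: "nat \<Rightarrow> nat \<Rightarrow> nat \<times> nat \<Rightarrow> real mat" where
  "mat_unit nr nc p = mat nr nc (\<lambda>q. if q = p then 1 else 0)"

definition mat_restrict :: "(nat \<times> nat) set \<Rightarrow> real mat \<Rightarrow> real mat" where
  "mat_restrict S X = mat (dim_row X) (dim_col X) (\<lambda>p. if p \<in> S then X $$ p else 0)"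

lemma mat_unit_carrier [simp]: "mat_unit nr nc p \<in> carrier_mat nr nc"
  by (simp add: mat_unit_def)

lemma mat_restrict_carrier [simp]: "X \<in> carrier_mat nr nc \<Longrightarrow> mat_restrict S X \<in> carrier_mat nr nc"
  by (simp add: mat_restrict_def)

lemma mat_restrict_empty: "X \<in> carrier_mat nr nc \<Longrightarrow> mat_restrict {} X = 0\<^sub>m nr nc"
  by (auto simp: mat_restrict_def)

lemma mat_restrict_all: "X \<in> carrier_mat nr nc \<Longrightarrow> mat_restrict ({..<nr} \<times> {..<nc}) X = X"
  by (auto simp: mat_restrict_def)

lemma mat_restrict_insert:
  "X \<in> carrier_mat nr nc \<Longrightarrow> p \<notin> S \<Longrightarrow>
   mat_restrict (insert p S) X = mat_restrict S X + X $$ p \<cdot>\<^sub>m mat_unit nr nc p"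
  by (intro eq_matI) (auto simp: mat_restrict_def mat_unit_def)

lemma seminorm_mat_restrict:
  fixes g :: "real mat \<Rightarrow> real"
  assumes add: "\<And>X Y. X \<in> carrier_mat nr nc \<Longrightarrow> Y \<in> carrier_mat nr nc \<Longrightarrow> g (X + Y) \<le> g X + g Y"
    and smult: "\<And>c X. X \<in> carrier_mat nr nc \<Longrightarrow> g (c \<cdot>\<^sub>m X) = \<bar>c\<bar> * g X"
    and X: "X \<in> carrier_mat nr nc" and S: "finite S"
  shows "g (mat_restrict S X) \<le> (\<Sum>p\<in>S. \<bar>X $$ p\<bar> * g (mat_unit nr nc p))"
  using S
proof (induction S rule: finite_induct)
  case empty
  have "g (0\<^sub>m nr nc) = 0"
    using smult[of "0\<^sub>m nr nc" 0] by simp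
  then show ?case
    using X by (simp add: mat_restrict_empty)
next
  case (insert p S)
  have "g (mat_restrict (insert p S) X) \<le> g (mat_restrict S X) + \<bar>X $$ p\<bar> * g (mat_unit nr nc p)"
    unfolding mat_restrict_insert[OF X insert.hyps(2)]
    using X add[of "mat_restrict S X" "X $$ p \<cdot>\<^sub>m mat_unit nr nc p"] smult[of "mat_unit nr nc p"] by simp
  then show ?case
    using insert by simp
qed

lemma seminorm_le_entry_norm:
  fixes g :: "real mat \<Rightarrow> real"
  assumes add: "\<And>X Y. X \<in> carrier_mat nr nc \<Longrightarrow> Y \<in> carrier_mat nr nc \<Longrightarrow> g (X + Y) \<le> g X + g Y"
    and smult: "\<And>c X. X \<in> carrier_mat nr nc \<Longrightarrow> g (c \<cdot>\<^sub>m X) = \<bar>c\<bar> * g X"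
  shows "\<exists>C \<ge> 0. \<forall>X \<in> carrier_mat nr nc. g X \<le> C * entry_norm X"
proof (intro exI conjI ballI)
  have nonneg: "0 \<le> g X" if "X \<in> carrier_mat nr nc" for X :: "real mat"
  proof -
    have "X + (-1) \<cdot>\<^sub>m X = 0 \<cdot>\<^sub>m X"
      using that by (intro eq_matI) auto
    then show ?thesis
      using add[of X "(-1) \<cdot>\<^sub>m X"] smult[of X] that by simp
  qed
  define C where "C = (\<Sum>p\<in>{..<nr} \<times> {..<nc}. g (mat_unit nr nc p))"
  show "0 \<le> C"
    unfolding C_def by (intro sum_nonneg nonneg) simp
  fix X :: "real mat" assume X: "X \<in> carrier_mat nr nc"
  have "g X \<le> (\<Sum>p\<in>{..<nr} \<times> {..<nc}. \<bar>X $$ p\<bar> * g (mat_unit nr nc p))"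
    using seminorm_mat_restrict[OF add smult X] mat_restrict_all[OF X] by (metis finite_SigmaI finite_lessThan)
  also have "\<dots> \<le> (\<Sum>p\<in>{..<nr} \<times> {..<nc}. entry_norm X * g (mat_unit nr nc p))"
    using X abs_index_le_entry_norm[of _ X] by (intro sum_mono mult_right_mono nonneg) auto
  also have "\<dots> = C * entry_norm X"
    by (simp add: C_def sum_distrib_left mult.commute)
  finally show "g X \<le> C * entry_norm X" .
qed

lemma matrix_norm_small:
  assumes "matrix_norm n N" "0 < \<epsilon>"
  obtains \<delta> where "0 < \<delta>" "\<And>X. X \<in> carrier_mat n n \<Longrightarrow> entry_norm X \<le> \<delta> \<Longrightarrow> N X < \<epsilon>"
proof -
  obtain C where C: "0 \<le> C" "\<And>X. X \<in> carrier_mat n n \<Longrightarrow> N X \<le> C * entry_norm X"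
    using seminorm_le_entry_norm[of n n N] assms(1) unfolding matrix_norm_def by blast
  show ?thesis
  proof (rule that)
    show "0 < \<epsilon> / (C + 1)"
      using assms(2) C(1) by simp
    fix X assume X: "X \<in> carrier_mat n n" "entry_norm X \<le> \<epsilon> / (C + 1)"
    have "N X \<le> C * (\<epsilon> / (C + 1))"
      using C(2)[OF X(1)] mult_left_mono[OF X(2) C(1)] by linarith
    also have "\<dots> < \<epsilon>"
      using assms(2) C(1) by (simp add: field_simps)
    finally show "N X < \<epsilon>" .
  qed
qed

definition vec_of_mat :: "'a mat \<Rightarrow> 'a vec" where
  "vec_of_mat X = vec (dim_row X * dim_col X) (\<lambda>b. X $$ (b div dim_col X, b mod dim_col X))"

definition mat_of_vec :: "nat \<Rightarrow> nat \<Rightarrow> 'a vec \<Rightarrow> 'a mat" where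
  "mat_of_vec nr nc v = mat nr nc (\<lambda>(i,j). v $ (i * nc + j))"

lemma pair_index_less: "i < nr \<Longrightarrow> j < (nc::nat) \<Longrightarrow> i * nc + j < nr * nc"
proof -
  assume "i < nr" "j < nc"
  then have "i * nc + j < Suc i * nc" by simp
  also have "\<dots> \<le> nr * nc" using \<open>i < nr\<close> by (intro mult_le_mono1) simp
  finally show ?thesis .
qed

lemma div_mod_less: "b < nr * nc \<Longrightarrow> b div nc < nr \<and> b mod nc < (nc::nat)"
  by (metis less_mult_imp_div_less mod_less_divisor mult_0_right neq0_conv not_less0)

lemma sum_div_mod_eq_sum_pairs:
  fixes nr nc :: nat
  shows "(\<Sum>b<nr * nc. f (b div nc, b mod nc)) = (\<Sum>p\<in>{..<nr} \<times> {..<nc}. f p)"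
  by (rule sum.reindex_bij_witness[where i = "\<lambda>(i,j). i * nc + j" and j = "\<lambda>b. (b div nc, b mod nc)"])
    (auto simp: div_mod_less pair_index_less)

lemma vec_of_mat_carrier [simp]: "X \<in> carrier_mat nr nc \<Longrightarrow> vec_of_mat X \<in> carrier_vec (nr * nc)"
  by (simp add: vec_of_mat_def)

lemma mat_of_vec_carrier [simp]: "mat_of_vec nr nc v \<in> carrier_mat nr nc"
  by (simp add: mat_of_vec_def)

lemma mat_of_vec_of_mat [simp]: "X \<in> carrier_mat nr nc \<Longrightarrow> mat_of_vec nr nc (vec_of_mat X) = X"
  by (intro eq_matI) (auto simp: mat_of_vec_def vec_of_mat_def pair_index_less)

lemma vec_of_mat_of_vec [simp]: "v \<in> carrier_vec (nr * nc) \<Longrightarrow> vec_of_mat (mat_of_vec nr nc v) = v"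
  by (intro eq_vecI) (auto simp: mat_of_vec_def vec_of_mat_def div_mod_less)

lemma vec_of_mat_zero [simp]: "vec_of_mat (0\<^sub>m nr nc) = 0\<^sub>v (nr * nc)"
  by (intro eq_vecI) (auto simp: vec_of_mat_def div_mod_less)

lemma mat_of_vec_zero [simp]: "mat_of_vec nr nc (0\<^sub>v (nr * nc)) = 0\<^sub>m nr nc"
  by (intro eq_matI) (auto simp: mat_of_vec_def pair_index_less)

definition linear_mat_map :: "nat \<Rightarrow> nat \<Rightarrow> (real mat \<Rightarrow> real mat) \<Rightarrow> bool" where
  "linear_mat_map nr nc L \<longleftrightarrow>
     (\<forall>X \<in> carrier_mat nr nc. L X \<in> carrier_mat nr nc) \<and>
     (\<forall>X \<in> carrier_mat nr nc. \<forall>Y \<in> carrier_mat nr nc. L (X + Y) = L X + L Y) \<and>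
     (\<forall>c. \<forall>X \<in> carrier_mat nr nc. L (c \<cdot>\<^sub>m X) = c \<cdot>\<^sub>m L X)"

context
  fixes nr nc L
  assumes lin: "linear_mat_map nr nc L"
begin

lemma linear_mat_map_carrier: "X \<in> carrier_mat nr nc \<Longrightarrow> L X \<in> carrier_mat nr nc"
  using lin by (simp add: linear_mat_map_def)

lemma linear_mat_map_add: "X \<in> carrier_mat nr nc \<Longrightarrow> Y \<in> carrier_mat nr nc \<Longrightarrow> L (X + Y) = L X + L Y"
  using lin by (simp add: linear_mat_map_def)

lemma linear_mat_map_smult: "X \<in> carrier_mat nr nc \<Longrightarrow> L (c \<cdot>\<^sub>m X) = c \<cdot>\<^sub>m L X"
  using lin by (simp add: linear_mat_map_def)

lemma linear_mat_map_zero: "L (0\<^sub>m nr nc) = 0\<^sub>m nr nc"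
proof -
  have "L (0\<^sub>m nr nc) = 0 \<cdot>\<^sub>m L (0\<^sub>m nr nc)"
    using linear_mat_map_smult[of "0\<^sub>m nr nc" 0] by simp
  also have "\<dots> = 0\<^sub>m nr nc"
    using linear_mat_map_carrier[of "0\<^sub>m nr nc"] by (intro eq_matI) auto
  finally show ?thesis .
qed

lemma linear_mat_map_diff: "X \<in> carrier_mat nr nc \<Longrightarrow> Y \<in> carrier_mat nr nc \<Longrightarrow> L (X - Y) = L X - L Y"
proof -
  assume X: "X \<in> carrier_mat nr nc" and Y: "Y \<in> carrier_mat nr nc"
  have "X - Y = X + (-1) \<cdot>\<^sub>m Y" and "L X - L Y = L X + (-1) \<cdot>\<^sub>m L Y"
    using X Y linear_mat_map_carrier[OF X] linear_mat_map_carrier[OF Y] by (auto intro!: eq_matI)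
  then show ?thesis
    using X Y by (simp add: linear_mat_map_add linear_mat_map_smult)
qed

lemma linear_mat_map_bounded: "\<exists>C \<ge> 0. \<forall>X \<in> carrier_mat nr nc. entry_norm (L X) \<le> C * entry_norm X"
  by (rule seminorm_le_entry_norm)
    (auto simp: linear_mat_map_add linear_mat_map_smult
      intro: entry_norm_add[OF linear_mat_map_carrier linear_mat_map_carrier])

lemma linear_mat_map_restrict_index:
  assumes X: "X \<in> carrier_mat nr nc" and S: "finite S" and ij: "i < nr" "j < nc"
  shows "L (mat_restrict S X) $$ (i,j) = (\<Sum>p\<in>S. X $$ p * L (mat_unit nr nc p) $$ (i,j))"
  using S
proof (induction S rule: finite_induct)
  case empty
  then show ?case
    using X ij by (simp add: mat_restrict_empty linear_mat_map_zero)
next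
  case (insert p S)
  then show ?case
    using X ij linear_mat_map_carrier[of "mat_restrict S X"] linear_mat_map_carrier[of "mat_unit nr nc p"]
    by (simp add: mat_restrict_insert linear_mat_map_add linear_mat_map_smult)
qed

lemma linear_mat_map_representation:
  obtains M where "M \<in> carrier_mat (nr * nc) (nr * nc)"
    and "\<And>X. X \<in> carrier_mat nr nc \<Longrightarrow> M *\<^sub>v vec_of_mat X = vec_of_mat (L X)"
proof
  define M where "M = mat (nr * nc) (nr * nc)
    (\<lambda>(a,b). L (mat_unit nr nc (b div nc, b mod nc)) $$ (a div nc, a mod nc))"
  show "M \<in> carrier_mat (nr * nc) (nr * nc)"
    by (simp add: M_def)
  fix X :: "real mat" assume X: "X \<in> carrier_mat nr nc"
  show "M *\<^sub>v vec_of_mat X = vec_of_mat (L X)"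
  proof (rule eq_vecI)
    fix a assume "a < dim_vec (vec_of_mat (L X))"
    then have a: "a < nr * nc"
      using linear_mat_map_carrier[OF X] by (simp add: vec_of_mat_def)
    have "(M *\<^sub>v vec_of_mat X) $ a
        = (\<Sum>b<nr * nc. X $$ (b div nc, b mod nc) * L (mat_unit nr nc (b div nc, b mod nc)) $$ (a div nc, a mod nc))"
      using a X by (auto simp: M_def vec_of_mat_def scalar_prod_def lessThan_atLeast0 mult.commute intro!: sum.cong)
    also have "\<dots> = (\<Sum>p\<in>{..<nr} \<times> {..<nc}. X $$ p * L (mat_unit nr nc p) $$ (a div nc, a mod nc))"
      by (rule sum_div_mod_eq_sum_pairs)
    also have "\<dots> = L (mat_restrict ({..<nr} \<times> {..<nc}) X) $$ (a div nc, a mod nc)"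
      using X div_mod_less[OF a] by (intro linear_mat_map_restrict_index[symmetric]) auto
    also have "\<dots> = vec_of_mat (L X) $ a"
      using a X linear_mat_map_carrier[OF X] by (simp add: mat_restrict_all vec_of_mat_def)
    finally show "(M *\<^sub>v vec_of_mat X) $ a = vec_of_mat (L X) $ a" .
  qed (use X linear_mat_map_carrier[OF X] in \<open>simp add: M_def vec_of_mat_def\<close>)
qed

(* The matrix M representing an injective L has trivial kernel, hence non-zero determinant. *)
lemma linear_mat_map_invertible_representation:
  assumes inj: "\<And>X. X \<in> carrier_mat nr nc \<Longrightarrow> L X = 0\<^sub>m nr nc \<Longrightarrow> X = 0\<^sub>m nr nc"
  obtains M B where "M \<in> carrier_mat (nr * nc) (nr * nc)" "B \<in> carrier_mat (nr * nc) (nr * nc)"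
    "M * B = 1\<^sub>m (nr * nc)" "B * M = 1\<^sub>m (nr * nc)"
    and "\<And>X. X \<in> carrier_mat nr nc \<Longrightarrow> M *\<^sub>v vec_of_mat X = vec_of_mat (L X)"
proof -
  obtain M where M: "M \<in> carrier_mat (nr * nc) (nr * nc)"
    and repr: "\<And>X. X \<in> carrier_mat nr nc \<Longrightarrow> M *\<^sub>v vec_of_mat X = vec_of_mat (L X)"
    using linear_mat_map_representation by blast
  have "det M \<noteq> 0"
  proof
    assume "det M = 0"
    then obtain v where v: "v \<in> carrier_vec (nr * nc)" "v \<noteq> 0\<^sub>v (nr * nc)" "M *\<^sub>v v = 0\<^sub>v (nr * nc)"
      using det_0_iff_vec_prod_zero_field[OF M] by blast
    define X where "X = mat_of_vec nr nc v"
    have X: "X \<in> carrier_mat nr nc"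
      by (simp add: X_def)
    have "vec_of_mat (L X) = 0\<^sub>v (nr * nc)"
      using repr[OF X] v by (simp add: X_def)
    then have "L X = 0\<^sub>m nr nc"
      using mat_of_vec_of_mat[OF linear_mat_map_carrier[OF X]] by simp
    then have "X = 0\<^sub>m nr nc"
      using inj X by blast
    then show False
      using vec_of_mat_of_vec[OF v(1)] v(2) by (simp add: X_def)
  qed
  then obtain B where B: "B \<in> carrier_mat (nr * nc) (nr * nc)" "M * B = 1\<^sub>m (nr * nc)"
    using det_non_zero_imp_unit[OF M, of undefined] unfolding Units_def by (auto simp: ring_mat_simps)
  moreover have "B * M = 1\<^sub>m (nr * nc)"
    using mat_mult_left_right_inverse[OF M B] .
  ultimately show ?thesis
    using that M repr by blast
qed

lemma linear_mat_map_inverse_linear: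
  assumes \<Psi>_carrier: "\<And>Y. Y \<in> carrier_mat nr nc \<Longrightarrow> \<Psi> Y \<in> carrier_mat nr nc"
    and right: "\<And>Y. Y \<in> carrier_mat nr nc \<Longrightarrow> L (\<Psi> Y) = Y"
    and left: "\<And>X. X \<in> carrier_mat nr nc \<Longrightarrow> \<Psi> (L X) = X"
  shows "linear_mat_map nr nc \<Psi>"
  unfolding linear_mat_map_def
proof (intro conjI ballI allI)
  fix X Y :: "real mat" assume X: "X \<in> carrier_mat nr nc" and Y: "Y \<in> carrier_mat nr nc"
  show "\<Psi> X \<in> carrier_mat nr nc"
    using X by (rule \<Psi>_carrier)
  have "\<Psi> (X + Y) = \<Psi> (L (\<Psi> X + \<Psi> Y))"
    using X Y right \<Psi>_carrier by (simp add: linear_mat_map_add)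
  then show "\<Psi> (X + Y) = \<Psi> X + \<Psi> Y"
    using X Y \<Psi>_carrier by (simp add: left)
  fix c
  have "\<Psi> (c \<cdot>\<^sub>m X) = \<Psi> (L (c \<cdot>\<^sub>m \<Psi> X))"
    using X right \<Psi>_carrier by (simp add: linear_mat_map_smult)
  then show "\<Psi> (c \<cdot>\<^sub>m X) = c \<cdot>\<^sub>m \<Psi> X"
    using X \<Psi>_carrier by (simp add: left)
qed

lemma linear_mat_map_inverse:
  assumes inj: "\<And>X. X \<in> carrier_mat nr nc \<Longrightarrow> L X = 0\<^sub>m nr nc \<Longrightarrow> X = 0\<^sub>m nr nc"
  obtains \<Psi> where "linear_mat_map nr nc \<Psi>"
    and "\<And>Y. Y \<in> carrier_mat nr nc \<Longrightarrow> L (\<Psi> Y) = Y"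
    and "\<And>X. X \<in> carrier_mat nr nc \<Longrightarrow> \<Psi> (L X) = X"
proof -
  obtain M B where M: "M \<in> carrier_mat (nr * nc) (nr * nc)" and B: "B \<in> carrier_mat (nr * nc) (nr * nc)"
    and MB: "M * B = 1\<^sub>m (nr * nc)" and BM: "B * M = 1\<^sub>m (nr * nc)"
    and repr: "\<And>X. X \<in> carrier_mat nr nc \<Longrightarrow> M *\<^sub>v vec_of_mat X = vec_of_mat (L X)"
    using linear_mat_map_invertible_representation[OF inj] by blast
  define \<Psi> where "\<Psi> Y = mat_of_vec nr nc (B *\<^sub>v vec_of_mat Y)" for Y :: "real mat"
  have \<Psi>_carrier: "\<Psi> Y \<in> carrier_mat nr nc" for Y
    by (simp add: \<Psi>_def)
  have right: "L (\<Psi> Y) = Y" if Y: "Y \<in> carrier_mat nr nc" for Y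
  proof -
    have "vec_of_mat (L (\<Psi> Y)) = M *\<^sub>v (B *\<^sub>v vec_of_mat Y)"
      using repr[of "\<Psi> Y"] B Y by (simp add: \<Psi>_def)
    also have "\<dots> = vec_of_mat Y"
      using M B MB Y by (simp add: assoc_mult_mat_vec[symmetric, of _ "nr * nc" "nr * nc"])
    finally show ?thesis
      using mat_of_vec_of_mat[OF Y] mat_of_vec_of_mat[OF linear_mat_map_carrier[OF \<Psi>_carrier]]
      by metis
  qed
  have left: "\<Psi> (L X) = X" if X: "X \<in> carrier_mat nr nc" for X
  proof -
    have "B *\<^sub>v vec_of_mat (L X) = (B * M) *\<^sub>v vec_of_mat X"
      using repr[OF X] M B X by (simp add: assoc_mult_mat_vec)
    then show ?thesis
      using BM X by (simp add: \<Psi>_def)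
  qed
  have "linear_mat_map nr nc \<Psi>"
    using \<Psi>_carrier right left by (intro linear_mat_map_inverse_linear) auto
  then show ?thesis
    using that right left by blast
qed

end

lemma linear_mat_map_compose:
  "linear_mat_map nr nc L \<Longrightarrow> linear_mat_map nr nc M \<Longrightarrow> linear_mat_map nr nc (\<lambda>X. L (M X))"
  unfolding linear_mat_map_def by simp

lemma linear_mat_map_plus:
  assumes L: "linear_mat_map nr nc L" and M: "linear_mat_map nr nc M"
  shows "linear_mat_map nr nc (\<lambda>X. L X + M X)"
proof -
  have [simp]: "X \<in> carrier_mat nr nc \<Longrightarrow> dim_row (L X) = nr \<and> dim_col (L X) = nc \<and>
      dim_row (M X) = nr \<and> dim_col (M X) = nc" for X
    using linear_mat_map_carrier[OF L] linear_mat_map_carrier[OF M] by auto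
  show ?thesis
    using L M unfolding linear_mat_map_def
    by (auto simp: linear_mat_map_add[OF L] linear_mat_map_add[OF M] linear_mat_map_smult[OF L]
        linear_mat_map_smult[OF M] algebra_simps intro!: eq_matI)
qed

lemma linear_mat_map_minus:
  assumes L: "linear_mat_map nr nc L" and M: "linear_mat_map nr nc M"
  shows "linear_mat_map nr nc (\<lambda>X. L X - M X)"
proof -
  have [simp]: "X \<in> carrier_mat nr nc \<Longrightarrow> dim_row (L X) = nr \<and> dim_col (L X) = nc \<and>
      dim_row (M X) = nr \<and> dim_col (M X) = nc" for X
    using linear_mat_map_carrier[OF L] linear_mat_map_carrier[OF M] by auto
  show ?thesis
    using L M unfolding linear_mat_map_def
    by (auto simp: linear_mat_map_add[OF L] linear_mat_map_add[OF M] linear_mat_map_smult[OF L]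
        linear_mat_map_smult[OF M] algebra_simps intro!: eq_matI)
qed

lemma linear_mat_map_id: "linear_mat_map nr nc (\<lambda>X. X)"
  by (simp add: linear_mat_map_def)

lemma linear_mat_map_mult_left: "A \<in> carrier_mat n n \<Longrightarrow> linear_mat_map n n (\<lambda>X. A * X)"
  by (auto simp: linear_mat_map_def mult_add_distrib_mat mult_smult_distrib)

lemma linear_mat_map_mult_right: "A \<in> carrier_mat n n \<Longrightarrow> linear_mat_map n n (\<lambda>X. X * A)"
  by (auto simp: linear_mat_map_def add_mult_distrib_mat mult_smult_assoc_mat)

section \<open>Patterns, commutators and the strong spectral property\<close>

(* The positions i \<noteq> j with \<not> H i j are those allowed for the test matrices of SSP_wrt n A H,
   see SSP_test_matrix_iff. *)
definition off_pattern :: "nat \<Rightarrow> (nat \<Rightarrow> nat \<Rightarrow> bool) \<Rightarrow> real mat \<Rightarrow> real mat" where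
  "off_pattern n H X = mat n n (\<lambda>(i,j). if i \<noteq> j \<and> \<not> H i j then X $$ (i,j) else 0)"

definition sym_off_pattern :: "nat \<Rightarrow> (nat \<Rightarrow> nat \<Rightarrow> bool) \<Rightarrow> real mat \<Rightarrow> real mat" where
  "sym_off_pattern n H X =
     mat n n (\<lambda>(i,j). if i \<noteq> j \<and> \<not> H i j then (X $$ (i,j) + X $$ (j,i)) / 2 else 0)"

definition commutator :: "real mat \<Rightarrow> real mat \<Rightarrow> real mat" where
  "commutator P Q = P * Q - Q * P"

lemma off_pattern_carrier [simp]: "off_pattern n H X \<in> carrier_mat n n"
  and off_pattern_dim [simp]: "dim_row (off_pattern n H X) = n" "dim_col (off_pattern n H X) = n"
  by (simp_all add: off_pattern_def)

lemma index_off_pattern: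
  "i < n \<Longrightarrow> j < n \<Longrightarrow> off_pattern n H X $$ (i,j) = (if i \<noteq> j \<and> \<not> H i j then X $$ (i,j) else 0)"
  by (simp add: off_pattern_def)

lemma sym_off_pattern_carrier [simp]: "sym_off_pattern n H X \<in> carrier_mat n n"
  and sym_off_pattern_dim [simp]: "dim_row (sym_off_pattern n H X) = n" "dim_col (sym_off_pattern n H X) = n"
  by (simp_all add: sym_off_pattern_def)

lemma commutator_carrier [simp]: "P \<in> carrier_mat n n \<Longrightarrow> Q \<in> carrier_mat n n \<Longrightarrow> commutator P Q \<in> carrier_mat n n"
  by (simp add: commutator_def minus_carrier_mat)

lemma off_pattern_idem [simp]: "off_pattern n H (off_pattern n H X) = off_pattern n H X"
  by (intro eq_matI) (auto simp: off_pattern_def)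

lemma off_pattern_add: "X \<in> carrier_mat n n \<Longrightarrow> Y \<in> carrier_mat n n \<Longrightarrow>
  off_pattern n H (X + Y) = off_pattern n H X + off_pattern n H Y"
  by (intro eq_matI) (auto simp: off_pattern_def)

lemma off_pattern_diff: "X \<in> carrier_mat n n \<Longrightarrow> Y \<in> carrier_mat n n \<Longrightarrow>
  off_pattern n H (X - Y) = off_pattern n H X - off_pattern n H Y"
  by (intro eq_matI) (auto simp: off_pattern_def)

lemma linear_off_pattern: "linear_mat_map n n (off_pattern n H)"
  by (auto simp: linear_mat_map_def off_pattern_def intro!: eq_matI)

lemma linear_sym_off_pattern: "linear_mat_map n n (sym_off_pattern n H)"
  by (auto simp: linear_mat_map_def sym_off_pattern_def field_simps intro!: eq_matI)

lemma off_pattern_transpose: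
  "symp H \<Longrightarrow> X \<in> carrier_mat n n \<Longrightarrow> off_pattern n H (transpose_mat X) = transpose_mat (off_pattern n H X)"
  by (intro eq_matI) (auto simp: off_pattern_def dest: sympD)

lemma entry_norm_off_pattern: "X \<in> carrier_mat n n \<Longrightarrow> entry_norm (off_pattern n H X) \<le> entry_norm X"
  unfolding entry_norm_def by (auto simp: off_pattern_def intro!: sum_mono)

lemma sym_off_pattern_idem: "symp H \<Longrightarrow> sym_off_pattern n H (sym_off_pattern n H X) = sym_off_pattern n H X"
  by (intro eq_matI) (auto simp: sym_off_pattern_def field_simps dest: sympD)

lemma off_pattern_sym_off_pattern [simp]: "off_pattern n H (sym_off_pattern n H X) = sym_off_pattern n H X"
  by (intro eq_matI) (auto simp: sym_off_pattern_def off_pattern_def)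

lemma transpose_sym_off_pattern [simp]: "symp H \<Longrightarrow> transpose_mat (sym_off_pattern n H X) = sym_off_pattern n H X"
  by (intro eq_matI) (auto simp: sym_off_pattern_def dest: sympD)

lemma sym_off_pattern_eq_iff:
  assumes "symp H" "X \<in> carrier_mat n n"
  shows "sym_off_pattern n H X = X \<longleftrightarrow> transpose_mat X = X \<and> off_pattern n H X = X"
proof
  assume fixed: "sym_off_pattern n H X = X"
  show "transpose_mat X = X \<and> off_pattern n H X = X"
    using transpose_sym_off_pattern[OF assms(1), of n X] off_pattern_sym_off_pattern[of n H X] fixed by simp
next
  assume "transpose_mat X = X \<and> off_pattern n H X = X"
  then have sym: "X $$ (j,i) = X $$ (i,j)" and pat: "off_pattern n H X $$ (i,j) = X $$ (i,j)"
    if "i < n" "j < n" for i j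
    using assms that by (metis carrier_matD index_transpose_mat(1))+
  show "sym_off_pattern n H X = X"
  proof (rule eq_matI)
    fix i j assume "i < dim_row X" "j < dim_col X"
    then have ij: "i < n" "j < n"
      using assms by auto
    then show "sym_off_pattern n H X $$ (i,j) = X $$ (i,j)"
      using sym[OF ij] pat[OF ij] by (auto simp: sym_off_pattern_def index_off_pattern split: if_splits)
  qed (use assms in auto)
qed

lemma commutator_transpose: "P \<in> carrier_mat n n \<Longrightarrow> Q \<in> carrier_mat n n \<Longrightarrow>
  transpose_mat (commutator P Q) = commutator (transpose_mat Q) (transpose_mat P)"
  unfolding commutator_def by (simp add: transpose_minus[of _ n n] transpose_mult[of _ n n])

lemma commutator_swap: "P \<in> carrier_mat n n \<Longrightarrow> Q \<in> carrier_mat n n \<Longrightarrow> commutator Q P = - commutator P Q"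
  unfolding commutator_def by (intro eq_matI) auto

lemma commutator_uminus_right:
  assumes "P \<in> carrier_mat n n" "Q \<in> carrier_mat n n"
  shows "commutator P (- Q) = commutator Q P"
proof -
  have "- M - - N = N - M" if "M \<in> carrier_mat n n" "N \<in> carrier_mat n n" for M N :: "real mat"
    using that by (intro eq_matI) auto
  then show ?thesis
    using assms by (simp add: commutator_def)
qed

lemma commutator_diff_left:
  "P \<in> carrier_mat n n \<Longrightarrow> Q \<in> carrier_mat n n \<Longrightarrow> R \<in> carrier_mat n n \<Longrightarrow>
   commutator (P - Q) R = commutator P R - commutator Q R"
  unfolding commutator_def by (simp add: minus_mult_distrib_mat mult_minus_distrib_mat) (intro eq_matI; auto)

lemma commutator_diff_right:
  "P \<in> carrier_mat n n \<Longrightarrow> Q \<in> carrier_mat n n \<Longrightarrow> R \<in> carrier_mat n n \<Longrightarrow>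
   commutator P (Q - R) = commutator P Q - commutator P R"
  unfolding commutator_def by (simp add: minus_mult_distrib_mat mult_minus_distrib_mat) (intro eq_matI; auto)

lemma transpose_commutator_sym:
  "A \<in> carrier_mat n n \<Longrightarrow> transpose_mat A = A \<Longrightarrow> W \<in> carrier_mat n n \<Longrightarrow> transpose_mat W = W \<Longrightarrow>
   transpose_mat (commutator A W) = - commutator A W"
  using commutator_transpose[of A n W] commutator_swap[of A n W] by simp

lemma entry_norm_commutator:
  assumes "P \<in> carrier_mat n n" "Q \<in> carrier_mat n n"
  shows "entry_norm (commutator P Q) \<le> 2 * entry_norm P * entry_norm Q"
proof -
  have "entry_norm (commutator P Q) \<le> entry_norm (P * Q) + entry_norm (Q * P)"
    unfolding commutator_def using assms by (intro entry_norm_diff) auto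
  also have "\<dots> \<le> entry_norm P * entry_norm Q + entry_norm Q * entry_norm P"
    using assms by (intro add_mono entry_norm_mult) auto
  finally show ?thesis by simp
qed

lemma SSP_test_matrix_iff:
  assumes "symp H"
  shows "X \<in> S_cl n (compl_graph n H) \<and> (\<forall>i<n. X $$ (i,i) = 0) \<longleftrightarrow>
    X \<in> carrier_mat n n \<and> sym_off_pattern n H X = X"
proof
  assume X: "X \<in> S_cl n (compl_graph n H) \<and> (\<forall>i<n. X $$ (i,i) = 0)"
  then have carrier: "X \<in> carrier_mat n n" and "transpose_mat X = X"
    by (auto simp: S_cl_def sym_mats_def)
  moreover have "off_pattern n H X = X"
    using X carrier by (intro eq_matI) (auto simp: S_cl_def compl_graph_def index_off_pattern)
  ultimately show "X \<in> carrier_mat n n \<and> sym_off_pattern n H X = X"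
    using sym_off_pattern_eq_iff[OF assms] by blast
next
  assume X: "X \<in> carrier_mat n n \<and> sym_off_pattern n H X = X"
  then have "transpose_mat X = X" and pat: "off_pattern n H X = X"
    using sym_off_pattern_eq_iff[OF assms] by blast+
  moreover have "X $$ (i,i) = 0" if "i < n" for i
    using index_off_pattern[OF that that, of H X] pat by simp
  moreover have "X $$ (i,j) = 0" if "i < n" "j < n" "H i j" for i j
    using index_off_pattern[OF that(1,2), of H X] pat that(3) by simp
  ultimately show "X \<in> S_cl n (compl_graph n H) \<and> (\<forall>i<n. X $$ (i,i) = 0)"
    using X by (auto simp: S_cl_def sym_mats_def compl_graph_def)
qed

lemma SSP_wrt_iff:
  assumes "symp H"
  shows "SSP_wrt n A H \<longleftrightarrow>
    (\<forall>X \<in> carrier_mat n n. sym_off_pattern n H X = X \<longrightarrow> commutator A X = 0\<^sub>m n n \<longrightarrow> X = 0\<^sub>m n n)"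
  using SSP_test_matrix_iff[OF assms] unfolding SSP_wrt_def commutator_def by blast

lemma SSP_wrt_mono: "edge_subset H H' \<Longrightarrow> SSP_wrt n A H \<Longrightarrow> SSP_wrt n A H'"
  unfolding SSP_wrt_def S_cl_def compl_graph_def edge_subset_def by blast

lemma off_pattern_S_pattern: "A \<in> S_pattern n G \<Longrightarrow> edge_subset G H \<Longrightarrow> off_pattern n H A = 0\<^sub>m n n"
  by (intro eq_matI) (auto simp: S_pattern_def edge_subset_def index_off_pattern)

definition new_edge_mat :: "nat \<Rightarrow> (nat \<Rightarrow> nat \<Rightarrow> bool) \<Rightarrow> (nat \<Rightarrow> nat \<Rightarrow> bool) \<Rightarrow> real mat" where
  "new_edge_mat n H H' = mat n n (\<lambda>(i,j). if H' i j \<and> \<not> H i j then 1 else 0)"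

lemma new_edge_mat_carrier [simp]: "new_edge_mat n H H' \<in> carrier_mat n n"
  by (simp add: new_edge_mat_def)

lemma sym_off_pattern_new_edge_mat:
  assumes "graph_on n H'" "symp H"
  shows "sym_off_pattern n H (new_edge_mat n H H') = new_edge_mat n H H'"
  using assms by (intro eq_matI) (auto simp: sym_off_pattern_def new_edge_mat_def graph_on_def dest: sympD)

lemma S_cl_if_off_pattern_diff_new_edges:
  assumes H': "graph_on n H'" and HH': "edge_subset H H'"
    and A: "A \<in> carrier_mat n n" "off_pattern n H A = 0\<^sub>m n n"
    and A': "A' \<in> carrier_mat n n" "transpose_mat A' = A'"
    and off: "off_pattern n H (A' - A) = t \<cdot>\<^sub>m new_edge_mat n H H'" and "t \<noteq> 0"
  shows "A' \<in> S_cl n H' \<and> (\<forall>i<n. \<forall>j<n. H' i j \<and> \<not> H i j \<longrightarrow> A' $$ (i,j) \<noteq> 0)"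
proof -
  have entry: "A' $$ (i,j) = (if H' i j then t else 0)" if "i < n" "j < n" "i \<noteq> j" "\<not> H i j" for i j
  proof -
    have "A $$ (i,j) = 0"
      using index_off_pattern[OF that(1,2), of H A] A(2) that by simp
    then show ?thesis
      using index_off_pattern[OF that(1,2), of H "A' - A"] off that A A' by (auto simp: new_edge_mat_def)
  qed
  have "H' i j" if "i < n" "j < n" "i \<noteq> j" "A' $$ (i,j) \<noteq> 0" for i j
    using entry[OF that(1-3)] that(4) HH' unfolding edge_subset_def by (metis (full_types))
  moreover have "A' $$ (i,j) \<noteq> 0" if "i < n" "j < n" "H' i j" "\<not> H i j" for i j
    using entry[OF that(1,2) _ that(4)] that(3) H' \<open>t \<noteq> 0\<close> by (auto simp: graph_on_def)
  ultimately show ?thesis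
    using A' by (auto simp: S_cl_def sym_mats_def)
qed

section \<open>The SSP operator and its inverse\<close>

definition frobenius_inner :: "real mat \<Rightarrow> real mat \<Rightarrow> real" where
  "frobenius_inner P Q = (\<Sum>i<dim_row P. \<Sum>j<dim_col P. P $$ (i,j) * Q $$ (i,j))"

lemma row_scalar_prod_row:
  "A \<in> carrier_mat nr k \<Longrightarrow> B \<in> carrier_mat nc k \<Longrightarrow> i < nr \<Longrightarrow> j < nc \<Longrightarrow>
   row A i \<bullet> row B j = (\<Sum>l<k. A $$ (i,l) * B $$ (j,l))"
  by (simp add: scalar_prod_def lessThan_atLeast0)

lemma col_scalar_prod_col:
  "A \<in> carrier_mat k nr \<Longrightarrow> B \<in> carrier_mat k nc \<Longrightarrow> i < nr \<Longrightarrow> j < nc \<Longrightarrow>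
   col A i \<bullet> col B j = (\<Sum>l<k. A $$ (l,i) * B $$ (l,j))"
  by (simp add: scalar_prod_def lessThan_atLeast0)

lemma frobenius_inner_mult_right:
  assumes "V \<in> carrier_mat n n" "K \<in> carrier_mat n n" "A \<in> carrier_mat n n"
  shows "frobenius_inner V (K * A) = frobenius_inner (V * transpose_mat A) K"
proof -
  have "frobenius_inner V (K * A) = (\<Sum>i<n. \<Sum>j<n. \<Sum>k<n. V $$ (i,j) * K $$ (i,k) * A $$ (k,j))"
    using assms by (auto simp: frobenius_inner_def row_scalar_prod_col sum_distrib_left mult.assoc
        intro!: sum.cong)
  also have "\<dots> = (\<Sum>i<n. \<Sum>k<n. \<Sum>j<n. V $$ (i,j) * K $$ (i,k) * A $$ (k,j))"
    by (intro sum.cong refl sum.swap)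
  also have "\<dots> = frobenius_inner (V * transpose_mat A) K"
    using assms by (auto simp: frobenius_inner_def row_scalar_prod_row sum_distrib_left sum_distrib_right
        mult.commute mult.left_commute intro!: sum.cong)
  finally show ?thesis .
qed

lemma frobenius_inner_mult_left:
  assumes "V \<in> carrier_mat n n" "K \<in> carrier_mat n n" "A \<in> carrier_mat n n"
  shows "frobenius_inner V (A * K) = frobenius_inner (transpose_mat A * V) K"
proof -
  have "frobenius_inner V (A * K) = (\<Sum>i<n. \<Sum>j<n. \<Sum>k<n. V $$ (i,j) * A $$ (i,k) * K $$ (k,j))"
    using assms by (auto simp: frobenius_inner_def row_scalar_prod_col sum_distrib_left mult.assoc
        intro!: sum.cong)
  also have "\<dots> = (\<Sum>i<n. \<Sum>k<n. \<Sum>j<n. V $$ (i,j) * A $$ (i,k) * K $$ (k,j))"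
    by (intro sum.cong refl sum.swap)
  also have "\<dots> = (\<Sum>k<n. \<Sum>i<n. \<Sum>j<n. V $$ (i,j) * A $$ (i,k) * K $$ (k,j))"
    by (rule sum.swap)
  also have "\<dots> = (\<Sum>k<n. \<Sum>j<n. \<Sum>i<n. V $$ (i,j) * A $$ (i,k) * K $$ (k,j))"
    by (intro sum.cong refl sum.swap)
  also have "\<dots> = frobenius_inner (transpose_mat A * V) K"
    using assms by (auto simp: frobenius_inner_def col_scalar_prod_col sum_distrib_left sum_distrib_right
        mult.commute mult.left_commute intro!: sum.cong)
  finally show ?thesis .
qed

lemma frobenius_inner_off_pattern:
  assumes V: "off_pattern n H V = V"
  shows "frobenius_inner V (off_pattern n H W) = frobenius_inner V W"
proof -
  have dims: "dim_row V = n" "dim_col V = n"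
    using off_pattern_dim V by metis+
  have "V $$ (i,j) * off_pattern n H W $$ (i,j) = V $$ (i,j) * W $$ (i,j)" if "i < n" "j < n" for i j
    using index_off_pattern[OF that, of H V] index_off_pattern[OF that, of H W] V by auto
  then show ?thesis
    unfolding frobenius_inner_def dims by (intro sum.cong refl) auto
qed

lemma frobenius_inner_self_eq_0:
  assumes K: "K \<in> carrier_mat nr nc" and "frobenius_inner K K = 0"
  shows "K = 0\<^sub>m nr nc"
proof (rule eq_matI)
  fix i j assume "i < dim_row (0\<^sub>m nr nc)" "j < dim_col (0\<^sub>m nr nc)"
  then have ij: "i < nr" "j < nc" by auto
  have "\<forall>i \<in> {..<nr}. (\<Sum>j<nc. K $$ (i,j) * K $$ (i,j)) = 0"
    using assms by (subst sum_nonneg_eq_0_iff[symmetric]) (auto simp: frobenius_inner_def intro!: sum_nonneg)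
  then have "\<forall>j \<in> {..<nc}. K $$ (i,j) * K $$ (i,j) = 0"
    using ij by (subst sum_nonneg_eq_0_iff[symmetric]) auto
  then show "K $$ (i,j) = 0\<^sub>m nr nc $$ (i,j)"
    using ij by auto
qed (use K in auto)

(* The linear part of Q |-> off_pattern n H (Q A Q^T) at Q = 1 in the skew direction [A, X]. *)
definition ssp_operator :: "nat \<Rightarrow> (nat \<Rightarrow> nat \<Rightarrow> bool) \<Rightarrow> real mat \<Rightarrow> real mat \<Rightarrow> real mat" where
  "ssp_operator n H A X = off_pattern n H (commutator (commutator A X) A)"

(* Extended by the identity off the test matrices, to get an endomorphism of all n x n matrices. *)
definition ssp_operator_ext :: "nat \<Rightarrow> (nat \<Rightarrow> nat \<Rightarrow> bool) \<Rightarrow> real mat \<Rightarrow> real mat \<Rightarrow> real mat" where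
  "ssp_operator_ext n H A X = ssp_operator n H A (sym_off_pattern n H X) + (X - sym_off_pattern n H X)"

lemma ssp_operator_carrier [simp]: "ssp_operator n H A X \<in> carrier_mat n n"
  by (simp add: ssp_operator_def)

lemma off_pattern_ssp_operator [simp]: "off_pattern n H (ssp_operator n H A X) = ssp_operator n H A X"
  by (simp add: ssp_operator_def)

lemma linear_ssp_operator: "A \<in> carrier_mat n n \<Longrightarrow> linear_mat_map n n (ssp_operator n H A)"
proof -
  assume A: "A \<in> carrier_mat n n"
  have inner: "linear_mat_map n n (\<lambda>X. A * X - X * A)"
    using A by (intro linear_mat_map_minus linear_mat_map_mult_left linear_mat_map_mult_right)
  have outer: "linear_mat_map n n (\<lambda>K. K * A - A * K)"
    using A by (intro linear_mat_map_minus linear_mat_map_mult_left linear_mat_map_mult_right)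
  have "ssp_operator n H A = (\<lambda>X. off_pattern n H ((\<lambda>K. K * A - A * K) (A * X - X * A)))"
    by (simp add: fun_eq_iff ssp_operator_def commutator_def)
  then show ?thesis
    using linear_mat_map_compose[OF linear_off_pattern linear_mat_map_compose[OF outer inner]] by simp
qed

lemma linear_ssp_operator_ext: "A \<in> carrier_mat n n \<Longrightarrow> linear_mat_map n n (ssp_operator_ext n H A)"
proof -
  assume A: "A \<in> carrier_mat n n"
  have "linear_mat_map n n (\<lambda>X. ssp_operator n H A (sym_off_pattern n H X))"
    by (rule linear_mat_map_compose[OF linear_ssp_operator[OF A] linear_sym_off_pattern])
  then show ?thesis
    unfolding ssp_operator_ext_def[abs_def]
    by (intro linear_mat_map_plus linear_mat_map_minus linear_mat_map_id linear_sym_off_pattern)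
qed

lemma sym_off_pattern_ssp_operator:
  assumes H: "symp H" and A: "A \<in> carrier_mat n n" "transpose_mat A = A"
    and X: "X \<in> carrier_mat n n" "transpose_mat X = X"
  shows "sym_off_pattern n H (ssp_operator n H A X) = ssp_operator n H A X"
proof -
  let ?K = "commutator A X"
  have K: "?K \<in> carrier_mat n n"
    using A X by simp
  have "transpose_mat ?K = commutator X A"
    using commutator_transpose[OF A(1) X(1)] A X by simp
  then have "transpose_mat (commutator ?K A) = commutator A (commutator X A)"
    using commutator_transpose[OF K A(1)] A by simp
  also have "\<dots> = commutator A (- ?K)"
    using commutator_swap[OF A(1) X(1)] by simp
  also have "\<dots> = commutator ?K A"
    using A(1) K by (rule commutator_uminus_right)
  finally have "transpose_mat (commutator ?K A) = commutator ?K A" .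
  then have "transpose_mat (ssp_operator n H A X) = ssp_operator n H A X"
    using off_pattern_transpose[OF H, of "commutator ?K A" n] K A by (simp add: ssp_operator_def)
  then show ?thesis
    using sym_off_pattern_eq_iff[OF H ssp_operator_carrier] by simp
qed

lemma frobenius_inner_ssp_operator:
  assumes A: "A \<in> carrier_mat n n" "transpose_mat A = A"
    and V: "V \<in> carrier_mat n n" "transpose_mat V = V" "off_pattern n H V = V"
  shows "frobenius_inner V (ssp_operator n H A V) = - frobenius_inner (commutator A V) (commutator A V)"
proof -
  let ?K = "commutator A V"
  have K: "?K \<in> carrier_mat n n"
    using A V by simp
  have "frobenius_inner V (ssp_operator n H A V) = frobenius_inner V (?K * A) - frobenius_inner V (A * ?K)"
    using frobenius_inner_off_pattern[OF V(3)] A V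
    by (simp add: ssp_operator_def commutator_def frobenius_inner_def algebra_simps sum_subtractf)
  also have "\<dots> = frobenius_inner (V * A) ?K - frobenius_inner (A * V) ?K"
    using frobenius_inner_mult_right[OF V(1) K A(1)] frobenius_inner_mult_left[OF V(1) K A(1)] A(2) by simp
  also have "\<dots> = - frobenius_inner ?K ?K"
    using A V by (auto simp: frobenius_inner_def commutator_def sum_subtractf[symmetric] sum_negf[symmetric]
        algebra_simps intro!: sum.cong)
  finally show ?thesis .
qed

lemma ssp_operator_injective:
  assumes H: "symp H" and A: "A \<in> carrier_mat n n" "transpose_mat A = A" and ssp: "SSP_wrt n A H"
    and V: "V \<in> carrier_mat n n" "sym_off_pattern n H V = V" and zero: "ssp_operator n H A V = 0\<^sub>m n n"
  shows "V = 0\<^sub>m n n"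
proof -
  have "transpose_mat V = V" "off_pattern n H V = V"
    using sym_off_pattern_eq_iff[OF H V(1)] V(2) by blast+
  then have "frobenius_inner (commutator A V) (commutator A V) = - frobenius_inner V (0\<^sub>m n n)"
    using frobenius_inner_ssp_operator[OF A V(1)] zero by (metis minus_minus)
  also have "\<dots> = 0"
    using V(1) by (simp add: frobenius_inner_def)
  finally have "commutator A V = 0\<^sub>m n n"
    using A V by (intro frobenius_inner_self_eq_0) auto
  then show ?thesis
    using ssp V unfolding SSP_wrt_iff[OF H] by blast
qed

lemma ssp_operator_ext_eq:
  "sym_off_pattern n H X = X \<Longrightarrow> ssp_operator_ext n H A X = ssp_operator n H A X"
  unfolding ssp_operator_ext_def by (metis sym_off_pattern_carrier ssp_operator_carrier
      right_add_zero_mat minus_r_inv_mat)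

lemma sym_off_pattern_ssp_operator_ext:
  assumes H: "symp H" and A: "A \<in> carrier_mat n n" "transpose_mat A = A" and X: "X \<in> carrier_mat n n"
  shows "sym_off_pattern n H (ssp_operator_ext n H A X) = ssp_operator n H A (sym_off_pattern n H X)"
proof -
  let ?S = "sym_off_pattern n H"
  have "?S (ssp_operator_ext n H A X) = ?S (ssp_operator n H A (?S X)) + (?S X - ?S (?S X))"
    unfolding ssp_operator_ext_def using X
    by (simp add: linear_mat_map_add[OF linear_sym_off_pattern] linear_mat_map_diff[OF linear_sym_off_pattern]
        minus_carrier_mat)
  also have "\<dots> = ssp_operator n H A (?S X)"
    using sym_off_pattern_ssp_operator[OF H A sym_off_pattern_carrier transpose_sym_off_pattern[OF H]]
    by (simp add: sym_off_pattern_idem[OF H] minus_r_inv_mat[OF sym_off_pattern_carrier]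
        right_add_zero_mat[OF ssp_operator_carrier])
  finally show ?thesis .
qed

lemma ssp_operator_ext_injective:
  assumes H: "symp H" and A: "A \<in> carrier_mat n n" "transpose_mat A = A" and ssp: "SSP_wrt n A H"
    and X: "X \<in> carrier_mat n n" and zero: "ssp_operator_ext n H A X = 0\<^sub>m n n"
  shows "X = 0\<^sub>m n n"
proof -
  have "ssp_operator n H A (sym_off_pattern n H X) = 0\<^sub>m n n"
    using sym_off_pattern_ssp_operator_ext[OF H A X] zero linear_mat_map_zero[OF linear_sym_off_pattern] by simp
  then have S0: "sym_off_pattern n H X = 0\<^sub>m n n"
    by (rule ssp_operator_injective[OF H A ssp sym_off_pattern_carrier sym_off_pattern_idem[OF H]])
  have "X = ssp_operator_ext n H A X"
    using X linear_mat_map_zero[OF linear_ssp_operator[OF A(1)]] by (simp add: ssp_operator_ext_def S0)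
      (intro eq_matI; simp)
  then show ?thesis
    using zero by simp
qed

lemma ssp_operator_ext_preimage:
  assumes H: "symp H" and A: "A \<in> carrier_mat n n" "transpose_mat A = A" and X: "X \<in> carrier_mat n n"
    and Y: "sym_off_pattern n H (ssp_operator_ext n H A X) = ssp_operator_ext n H A X"
  shows "sym_off_pattern n H X = X"
proof -
  let ?S = "sym_off_pattern n H X"
  have eq: "ssp_operator n H A ?S + (X - ?S) = ssp_operator n H A ?S"
    using Y sym_off_pattern_ssp_operator_ext[OF H A X] by (simp add: ssp_operator_ext_def)
  show ?thesis
  proof (rule eq_matI)
    fix i j assume "i < dim_row X" "j < dim_col X"
    then have ij: "i < n" "j < n"
      using X by auto
    have "(ssp_operator n H A ?S + (X - ?S)) $$ (i,j) = ssp_operator n H A ?S $$ (i,j)"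
      using eq by simp
    then show "?S $$ (i,j) = X $$ (i,j)"
      using ij X by simp
  qed (use X in auto)
qed

locale ssp_inverse =
  fixes n :: nat and H :: "nat \<Rightarrow> nat \<Rightarrow> bool" and A :: "real mat"
    and \<Psi> :: "real mat \<Rightarrow> real mat" and c :: real
  assumes symp_H: "symp H"
    and A_carrier: "A \<in> carrier_mat n n" and A_sym: "transpose_mat A = A"
    and linear_\<Psi>: "linear_mat_map n n \<Psi>"
    and ssp_operator_ext_\<Psi>: "\<And>Y. Y \<in> carrier_mat n n \<Longrightarrow> ssp_operator_ext n H A (\<Psi> Y) = Y"
    and \<Psi>_ssp_operator_ext: "\<And>X. X \<in> carrier_mat n n \<Longrightarrow> \<Psi> (ssp_operator_ext n H A X) = X"
    and c_nonneg: "0 \<le> c"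
    and entry_norm_\<Psi>: "\<And>Y. Y \<in> carrier_mat n n \<Longrightarrow> entry_norm (\<Psi> Y) \<le> c * entry_norm Y"

lemma ssp_inverse_exists:
  assumes H: "symp H" and A: "A \<in> carrier_mat n n" "transpose_mat A = A" and ssp: "SSP_wrt n A H"
  obtains \<Psi> c where "ssp_inverse n H A \<Psi> c"
proof -
  obtain \<Psi> where lin: "linear_mat_map n n \<Psi>"
    and right: "\<And>Y. Y \<in> carrier_mat n n \<Longrightarrow> ssp_operator_ext n H A (\<Psi> Y) = Y"
    and left: "\<And>X. X \<in> carrier_mat n n \<Longrightarrow> \<Psi> (ssp_operator_ext n H A X) = X"
    using linear_mat_map_inverse[OF linear_ssp_operator_ext[OF A(1)] ssp_operator_ext_injective[OF H A ssp]]
    by blast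
  obtain c where "0 \<le> c" "\<forall>Y \<in> carrier_mat n n. entry_norm (\<Psi> Y) \<le> c * entry_norm Y"
    using linear_mat_map_bounded[OF lin] by blast
  then show ?thesis
    by (intro that, unfold_locales) (use H A lin right left in auto)
qed

context ssp_inverse
begin

lemma \<Psi>_test_matrix:
  assumes Y: "Y \<in> carrier_mat n n" "sym_off_pattern n H Y = Y"
  shows "sym_off_pattern n H (\<Psi> Y) = \<Psi> Y" and "ssp_operator n H A (\<Psi> Y) = Y"
proof -
  have \<Psi>Y: "\<Psi> Y \<in> carrier_mat n n"
    using linear_mat_map_carrier[OF linear_\<Psi> Y(1)] .
  show fixed: "sym_off_pattern n H (\<Psi> Y) = \<Psi> Y"
    using ssp_operator_ext_preimage[OF symp_H A_carrier A_sym \<Psi>Y] ssp_operator_ext_\<Psi>[OF Y(1)] Y(2) by simp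
  show "ssp_operator n H A (\<Psi> Y) = Y"
    using ssp_operator_ext_eq[OF fixed] ssp_operator_ext_\<Psi>[OF Y(1)] by simp
qed

lemma entry_norm_le_ssp_operator:
  assumes X: "X \<in> carrier_mat n n" "sym_off_pattern n H X = X"
  shows "entry_norm X \<le> c * entry_norm (ssp_operator n H A X)"
proof -
  have "X = \<Psi> (ssp_operator n H A X)"
    using \<Psi>_ssp_operator_ext[OF X(1)] ssp_operator_ext_eq[OF X(2)] by simp
  then show ?thesis
    using entry_norm_\<Psi>[OF ssp_operator_carrier, of H A X] by simp
qed

lemma SSP_wrt_near:
  assumes A': "A' \<in> carrier_mat n n" and close: "4 * c * entry_norm A * entry_norm (A - A') < 1"
  shows "SSP_wrt n A' H"
  unfolding SSP_wrt_iff[OF symp_H]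
proof (intro ballI impI)
  fix X assume X: "X \<in> carrier_mat n n" "sym_off_pattern n H X = X" and comm: "commutator A' X = 0\<^sub>m n n"
  define a d x where "a = entry_norm A" and "d = entry_norm (A - A')" and "x = entry_norm X"
  have nonneg: "0 \<le> a" "0 \<le> d" "0 \<le> x"
    by (simp_all add: a_def d_def x_def entry_norm_nonneg)
  have K: "commutator A X \<in> carrier_mat n n"
    using A_carrier X(1) by simp
  have "commutator A X = commutator (A - A') X"
    using commutator_diff_left[OF A_carrier A' X(1)] comm carrier_matD[OF K] by (simp, intro eq_matI; simp)
  then have "entry_norm (commutator A X) \<le> 2 * d * x"
    using entry_norm_commutator[of "A - A'" n X] A' X(1) by (simp add: minus_carrier_mat d_def x_def)
  moreover have "entry_norm (ssp_operator n H A X) \<le> 2 * entry_norm (commutator A X) * a"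
    using entry_norm_off_pattern[of "commutator (commutator A X) A" n H] A_carrier K
      entry_norm_commutator[OF K A_carrier] by (simp add: ssp_operator_def a_def)
  ultimately have "entry_norm (ssp_operator n H A X) \<le> 2 * (2 * d * x) * a"
    using nonneg by (meson mult_left_mono mult_right_mono order_trans zero_le_numeral)
  then have "x \<le> c * (2 * (2 * d * x) * a)"
    using entry_norm_le_ssp_operator[OF X] c_nonneg mult_left_mono[of _ _ c] unfolding x_def by fastforce
  also have "\<dots> = (4 * c * a * d) * x"
    by (simp add: algebra_simps)
  finally have "x \<le> 0"
    using close nonneg unfolding a_def d_def by (metis less_irrefl mult_le_cancel_right1 not_le)
  then show "X = 0\<^sub>m n n"
    using entry_norm_eq_0_iff[OF X(1)] nonneg by (simp add: x_def)
qed

end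

section \<open>Orthogonal corrections\<close>

(* 1 + Z is orthogonal iff Z + Z^T = - Z^T Z, i.e. iff the symmetric part of Z is orth_sym Z. *)
definition orth_sym :: "real mat \<Rightarrow> real mat" where
  "orth_sym Z = (-1/2) \<cdot>\<^sub>m (transpose_mat Z * Z)"

lemma orth_sym_dim [simp]: "dim_row (orth_sym Z) = dim_col Z" "dim_col (orth_sym Z) = dim_col Z"
  by (simp_all add: orth_sym_def)

lemma orth_sym_carrier [simp]: "Z \<in> carrier_mat n n \<Longrightarrow> orth_sym Z \<in> carrier_mat n n"
  by (simp add: orth_sym_def)

lemma transpose_orth_sym [simp]: "Z \<in> carrier_mat n n \<Longrightarrow> transpose_mat (orth_sym Z) = orth_sym Z"
  by (intro eq_matI) (auto simp: orth_sym_def intro: comm_scalar_prod[of _ n])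

lemma entry_norm_orth_sym: "Z \<in> carrier_mat nr nc \<Longrightarrow> entry_norm (orth_sym Z) \<le> entry_norm Z ^ 2 / 2"
  using entry_norm_mult[of "transpose_mat Z" nc nr Z nc] by (simp add: orth_sym_def power2_eq_square)

lemma entry_norm_orth_sym_diff:
  assumes Z: "Z1 \<in> carrier_mat nr nc" "Z2 \<in> carrier_mat nr nc"
  shows "entry_norm (orth_sym Z1 - orth_sym Z2) \<le> (entry_norm Z1 + entry_norm Z2) / 2 * entry_norm (Z1 - Z2)"
proof -
  have "entry_norm (orth_sym Z1 - orth_sym Z2) = entry_norm (transpose_mat Z1 * Z1 - transpose_mat Z2 * Z2) / 2"
    unfolding orth_sym_def using Z by (subst entry_norm_smult_diff[of _ nc nc]) auto
  also have "entry_norm (transpose_mat Z1 * Z1 - transpose_mat Z2 * Z2)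
      \<le> entry_norm (transpose_mat Z1 - transpose_mat Z2) * entry_norm Z1 + entry_norm Z2 * entry_norm (Z1 - Z2)"
    using Z entry_norm_mult_diff[of "transpose_mat Z1" nc nr "transpose_mat Z2" Z1 nc Z2] by simp
  also have "entry_norm (transpose_mat Z1 - transpose_mat Z2) = entry_norm (Z1 - Z2)"
    using Z by (simp add: transpose_minus[symmetric])
  finally show ?thesis
    by (simp add: algebra_simps add_divide_distrib)
qed

lemma transpose_one_plus_mult:
  fixes Z :: "'a :: comm_ring_1 mat"
  assumes Z: "Z \<in> carrier_mat n n"
  shows "transpose_mat (1\<^sub>m n + Z) * (1\<^sub>m n + Z) = 1\<^sub>m n + (Z + transpose_mat Z + transpose_mat Z * Z)"
  using Z by (simp add: transpose_add[of _ n n] add_mult_distrib_mat[of _ n n _ _ n] mult_add_distrib_mat[of _ n n _ n])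
    (intro eq_matI; simp)

lemma orthogonal_if_skew_plus_orth_sym:
  assumes Z: "Z \<in> carrier_mat n n" and K: "K \<in> carrier_mat n n" "transpose_mat K = - K"
    and decomp: "Z = K + orth_sym Z"
  shows "transpose_mat (1\<^sub>m n + Z) * (1\<^sub>m n + Z) = 1\<^sub>m n"
proof -
  define S where "S = orth_sym Z"
  have S: "S \<in> carrier_mat n n" "transpose_mat S = S"
    using Z by (simp_all add: S_def)
  have Z_eq: "Z = K + S"
    using decomp unfolding S_def[symmetric] .
  have "Z + transpose_mat Z + transpose_mat Z * Z = 0\<^sub>m n n"
  proof (rule eq_matI)
    fix i j assume "i < dim_row (0\<^sub>m n n)" "j < dim_col (0\<^sub>m n n)"
    then have ij: "i < n" "j < n" by auto
    have "K $$ (j,i) = - K $$ (i,j)"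
      using ij K by (metis carrier_matD index_transpose_mat(1) index_uminus_mat(1) uminus_carrier_iff_mat)
    moreover have "S $$ (j,i) = S $$ (i,j)"
      using ij S by (metis carrier_matD index_transpose_mat(1))
    moreover have "S $$ (i,j) = - (transpose_mat Z * Z) $$ (i,j) / 2"
      using ij Z by (simp add: S_def orth_sym_def)
    moreover have "Z $$ (i,j) = K $$ (i,j) + S $$ (i,j)" "Z $$ (j,i) = K $$ (j,i) + S $$ (j,i)"
      using ij K S by (simp_all add: Z_eq)
    ultimately show "(Z + transpose_mat Z + transpose_mat Z * Z) $$ (i,j) = 0\<^sub>m n n $$ (i,j)"
      using ij Z by simp
  qed (use Z in auto)
  then show ?thesis
    using transpose_one_plus_mult[OF Z] by simp
qed

lemma conj_minus_expansion:
  fixes Z A :: "'a :: comm_ring_1 mat"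
  assumes "Z \<in> carrier_mat n n" "A \<in> carrier_mat n n"
  shows "(1\<^sub>m n + Z) * A * transpose_mat (1\<^sub>m n + Z) - A = Z * A + A * transpose_mat Z + Z * A * transpose_mat Z"
  using assms by (simp add: transpose_add[of _ n n] add_mult_distrib_mat[of _ n n _ _ n] mult_add_distrib_mat[of _ n n _ n])
    (intro eq_matI; simp)

lemma entry_norm_conj_minus:
  assumes Z: "Z \<in> carrier_mat n n" and A: "A \<in> carrier_mat n n"
  shows "entry_norm ((1\<^sub>m n + Z) * A * transpose_mat (1\<^sub>m n + Z) - A) \<le> entry_norm A * entry_norm Z * (2 + entry_norm Z)"
proof -
  define a z where "a = entry_norm A" and "z = entry_norm Z"
  have nonneg: "0 \<le> a" "0 \<le> z"
    by (simp_all add: a_def z_def entry_norm_nonneg)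
  have "entry_norm (Z * A * transpose_mat Z) \<le> entry_norm (Z * A) * z"
    using entry_norm_mult[of "Z * A" n n "transpose_mat Z" n] Z A by (simp add: z_def)
  also have "\<dots> \<le> z * a * z"
    using entry_norm_mult[OF Z A] nonneg by (simp add: a_def z_def mult_right_mono)
  finally have "entry_norm ((1\<^sub>m n + Z) * A * transpose_mat (1\<^sub>m n + Z) - A) \<le> z * a + a * z + z * a * z"
    unfolding conj_minus_expansion[OF Z A]
    using entry_norm_add3[of "Z * A" n n "A * transpose_mat Z" "Z * A * transpose_mat Z"] Z A
      entry_norm_mult[OF Z A] entry_norm_mult[of A n n "transpose_mat Z" n]
    unfolding a_def z_def by (simp add: mult.commute[of "entry_norm Z"])
  also have "\<dots> = a * z * (2 + z)"
    by (simp add: algebra_simps)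
  finally show ?thesis
    by (simp add: a_def z_def)
qed

lemma off_pattern_conj_expansion:
  assumes A: "A \<in> carrier_mat n n" "transpose_mat A = A" and W: "W \<in> carrier_mat n n" "transpose_mat W = W"
    and Z: "Z \<in> carrier_mat n n" and decomp: "Z = commutator A W + orth_sym Z"
  shows "off_pattern n H (Z * A + A * transpose_mat Z + Z * A * transpose_mat Z)
    = ssp_operator n H A W + off_pattern n H (orth_sym Z * A + A * orth_sym Z + Z * A * transpose_mat Z)"
proof -
  define K S where "K = commutator A W" and "S = orth_sym Z"
  have K: "K \<in> carrier_mat n n" and S: "S \<in> carrier_mat n n" "transpose_mat S = S"
    using A W Z by (simp_all add: K_def S_def)
  have Z_eq: "Z = K + S"
    using decomp unfolding K_def[symmetric] S_def[symmetric] .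
  have "transpose_mat K = - K"
    unfolding K_def using A W by (rule transpose_commutator_sym)
  then have ZT: "transpose_mat Z = - K + S"
    using K S by (simp add: Z_eq transpose_add[of _ n n])
  have "Z * A + A * transpose_mat Z + Z * A * transpose_mat Z
      = commutator K A + (S * A + A * S + Z * A * transpose_mat Z)"
  proof -
    have "Z * A = K * A + S * A"
      unfolding Z_eq using K S(1) A(1) by (rule add_mult_distrib_mat)
    moreover have "A * transpose_mat Z = - (A * K) + A * S"
      unfolding ZT using A K S by (simp add: mult_add_distrib_mat[of _ n n _ n])
    ultimately show ?thesis
      using A K S Z by (simp add: commutator_def) (intro eq_matI; simp)
  qed
  then show ?thesis
    using A K S Z by (simp add: off_pattern_add ssp_operator_def K_def S_def)
qed

lemma spec_orthogonal_conj:
  assumes Q: "Q \<in> carrier_mat n n" and A: "A \<in> carrier_mat n n" and orth: "transpose_mat Q * Q = 1\<^sub>m n"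
  shows "spec (Q * A * transpose_mat Q) = spec A"
proof -
  have "Q * transpose_mat Q = 1\<^sub>m n"
    using mat_mult_left_right_inverse[of "transpose_mat Q" n Q] Q orth by simp
  then have "similar_mat (Q * A * transpose_mat Q) A"
    using Q A orth by (intro similar_matI[of "Q * A * transpose_mat Q" A "Q" "transpose_mat Q" n]) auto
  then show ?thesis
    by (simp add: spec_def char_poly_similar)
qed

context ssp_inverse
begin

definition pattern_remainder :: "real mat \<Rightarrow> real mat" where
  "pattern_remainder Z = off_pattern n H (orth_sym Z * A + A * orth_sym Z + Z * A * transpose_mat Z)"

(* A fixed point Z = [A, W] + orth_sym Z with W = \<Psi> (Y - pattern_remainder Z) makes 1 + Z
   orthogonal with off_pattern n H ((1 + Z) A (1 + Z)^T - A) = Y: the part of the left-hand side linear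
   in W is ssp_operator n H A W, the rest is pattern_remainder Z (off_pattern_conj_expansion). *)
definition correction_step :: "real mat \<Rightarrow> real mat \<Rightarrow> real mat" where
  "correction_step Y Z = commutator A (\<Psi> (Y - pattern_remainder Z)) + orth_sym Z"

lemma pattern_remainder_carrier [simp]: "pattern_remainder Z \<in> carrier_mat n n"
  by (simp add: pattern_remainder_def)

lemma sym_off_pattern_pattern_remainder:
  assumes Z: "Z \<in> carrier_mat n n"
  shows "sym_off_pattern n H (pattern_remainder Z) = pattern_remainder Z"
proof -
  let ?S = "orth_sym Z"
  let ?M = "?S * A + A * ?S + Z * A * transpose_mat Z"
  have M: "?M \<in> carrier_mat n n"
    using Z A_carrier by simp
  have SA: "?S * A \<in> carrier_mat n n" "A * ?S \<in> carrier_mat n n"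
    using Z A_carrier by (meson mult_carrier_mat orth_sym_carrier)+
  have "transpose_mat ?M = ?M"
    using Z A_carrier A_sym SA
    by (simp add: transpose_add[of _ n n] transpose_mult[of _ n n _ n]) (intro eq_matI; auto)
  then have "transpose_mat (pattern_remainder Z) = pattern_remainder Z"
    using off_pattern_transpose[OF symp_H M] by (simp add: pattern_remainder_def)
  then show ?thesis
    using sym_off_pattern_eq_iff[OF symp_H pattern_remainder_carrier] by (simp add: pattern_remainder_def)
qed

lemma entry_norm_pattern_remainder:
  assumes Z: "Z \<in> carrier_mat n n"
  shows "entry_norm (pattern_remainder Z) \<le> 2 * entry_norm A * entry_norm Z ^ 2"
proof -
  define a z s where "a = entry_norm A" and "z = entry_norm Z" and "s = entry_norm (orth_sym Z)"
  have nonneg: "0 \<le> a" "0 \<le> z"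
    by (simp_all add: a_def z_def entry_norm_nonneg)
  have S: "orth_sym Z \<in> carrier_mat n n" and s: "s \<le> z ^ 2 / 2"
    using Z entry_norm_orth_sym[OF Z] by (simp_all add: s_def z_def)
  have prods: "orth_sym Z * A \<in> carrier_mat n n" "A * orth_sym Z \<in> carrier_mat n n"
    "Z * A * transpose_mat Z \<in> carrier_mat n n"
    using Z S A_carrier by auto
  have "entry_norm (pattern_remainder Z)
      \<le> entry_norm (orth_sym Z * A) + entry_norm (A * orth_sym Z) + entry_norm (Z * A * transpose_mat Z)"
    unfolding pattern_remainder_def using prods
    by (meson add_carrier_mat entry_norm_add3 entry_norm_off_pattern order_trans)
  also have "\<dots> \<le> s * a + a * s + z * a * z"
  proof -
    have "entry_norm (Z * A * transpose_mat Z) \<le> entry_norm (Z * A) * z"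
      using entry_norm_mult[of "Z * A" n n "transpose_mat Z" n] Z A_carrier by (simp add: z_def)
    also have "\<dots> \<le> z * a * z"
      using entry_norm_mult[OF Z A_carrier] nonneg by (simp add: a_def z_def mult_right_mono)
    finally show ?thesis
      using entry_norm_mult[OF S A_carrier] entry_norm_mult[OF A_carrier S] unfolding a_def s_def
      by linarith
  qed
  also have "\<dots> \<le> 2 * a * z ^ 2"
    using mult_right_mono[OF s nonneg(1)] by (simp add: algebra_simps power2_eq_square)
  finally show ?thesis
    by (simp add: a_def z_def)
qed

lemma entry_norm_pattern_remainder_diff:
  assumes Z1: "Z1 \<in> carrier_mat n n" and Z2: "Z2 \<in> carrier_mat n n"
  shows "entry_norm (pattern_remainder Z1 - pattern_remainder Z2)
    \<le> 2 * entry_norm A * (entry_norm Z1 + entry_norm Z2) * entry_norm (Z1 - Z2)"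
proof -
  define a z1 z2 d where "a = entry_norm A" and "z1 = entry_norm Z1" and "z2 = entry_norm Z2"
    and "d = entry_norm (Z1 - Z2)"
  define S1 S2 where "S1 = orth_sym Z1" and "S2 = orth_sym Z2"
  have nonneg: "0 \<le> a" "0 \<le> z1" "0 \<le> z2" "0 \<le> d"
    by (simp_all add: a_def z1_def z2_def d_def entry_norm_nonneg)
  have S: "S1 \<in> carrier_mat n n" "S2 \<in> carrier_mat n n"
    using Z1 Z2 by (simp_all add: S1_def S2_def)
  have dS: "entry_norm (S1 - S2) \<le> (z1 + z2) / 2 * d"
    using entry_norm_orth_sym_diff[OF Z1 Z2] by (simp add: S1_def S2_def z1_def z2_def d_def)
  have "entry_norm (pattern_remainder Z1 - pattern_remainder Z2)
      \<le> entry_norm ((S1 * A + A * S1 + Z1 * A * transpose_mat Z1) - (S2 * A + A * S2 + Z2 * A * transpose_mat Z2))"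
    unfolding pattern_remainder_def S1_def[symmetric] S2_def[symmetric]
    using Z1 Z2 S A_carrier by (simp add: off_pattern_diff[symmetric] entry_norm_off_pattern minus_carrier_mat)
  also have "\<dots> \<le> entry_norm (S1 * A - S2 * A) + entry_norm (A * S1 - A * S2)
      + entry_norm (Z1 * A * transpose_mat Z1 - Z2 * A * transpose_mat Z2)"
    using Z1 Z2 S A_carrier by (intro entry_norm_add3_diff) auto
  also have "\<dots> \<le> entry_norm (S1 - S2) * a + a * entry_norm (S1 - S2) + (d * a * z1 + z2 * a * d)"
  proof -
    have "entry_norm (Z1 * A * transpose_mat Z1 - Z2 * A * transpose_mat Z2)
        \<le> entry_norm (Z1 * A - Z2 * A) * z1 + entry_norm (Z2 * A) * d"
      using entry_norm_mult_diff[of "Z1 * A" n n "Z2 * A" "transpose_mat Z1" n "transpose_mat Z2"] Z1 Z2 A_carrier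
      by (simp add: z1_def d_def transpose_minus[symmetric])
    also have "\<dots> \<le> d * a * z1 + z2 * a * d"
      using entry_norm_mult_diff[OF Z1 Z2 A_carrier A_carrier] entry_norm_mult[OF Z2 A_carrier] nonneg
      by (intro add_mono mult_right_mono) (simp_all add: a_def d_def z2_def)
    finally show ?thesis
      using entry_norm_mult_diff[OF S A_carrier A_carrier] entry_norm_mult_diff[OF A_carrier A_carrier S]
      unfolding a_def by (simp add: mult.commute[of _ "entry_norm A"])
  qed
  also have "\<dots> \<le> 2 * a * (z1 + z2) * d"
    using mult_left_mono[OF dS nonneg(1)] by (simp add: algebra_simps)
  finally show ?thesis
    by (simp add: a_def z1_def z2_def d_def)
qed

lemma correction_step_carrier:
  "Y \<in> carrier_mat n n \<Longrightarrow> Z \<in> carrier_mat n n \<Longrightarrow> correction_step Y Z \<in> carrier_mat n n"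
  using linear_mat_map_carrier[OF linear_\<Psi>, of "Y - pattern_remainder Z"] A_carrier
  by (simp add: correction_step_def minus_carrier_mat)

lemma entry_norm_commutator_\<Psi>:
  assumes Y: "Y \<in> carrier_mat n n"
  shows "entry_norm (commutator A (\<Psi> Y)) \<le> 2 * entry_norm A * c * entry_norm Y"
proof -
  have "entry_norm (commutator A (\<Psi> Y)) \<le> 2 * entry_norm A * entry_norm (\<Psi> Y)"
    using entry_norm_commutator[OF A_carrier linear_mat_map_carrier[OF linear_\<Psi> Y]] .
  also have "\<dots> \<le> 2 * entry_norm A * (c * entry_norm Y)"
    using entry_norm_\<Psi>[OF Y] entry_norm_nonneg[of A] by (intro mult_left_mono) auto
  finally show ?thesis
    by (simp add: mult.assoc)
qed

lemma commutator_\<Psi>_diff: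
  assumes "Y1 \<in> carrier_mat n n" "Y2 \<in> carrier_mat n n"
  shows "commutator A (\<Psi> Y1) - commutator A (\<Psi> Y2) = commutator A (\<Psi> (Y1 - Y2))"
  using commutator_diff_right[OF A_carrier linear_mat_map_carrier[OF linear_\<Psi> assms(1)]
      linear_mat_map_carrier[OF linear_\<Psi> assms(2)]] linear_mat_map_diff[OF linear_\<Psi> assms]
  by simp

lemma entry_norm_correction_step:
  assumes Y: "Y \<in> carrier_mat n n" and r: "0 \<le> r" "r * (16 * c * entry_norm A ^ 2 + 2) \<le> 1"
    and Y_small: "4 * c * entry_norm A * entry_norm Y \<le> r"
    and Z: "Z \<in> carrier_mat n n" "entry_norm Z \<le> r"
  shows "entry_norm (correction_step Y Z) \<le> r"
proof -
  define a y z where "a = entry_norm A" and "y = entry_norm Y" and "z = entry_norm Z"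
  have nonneg: "0 \<le> a" "0 \<le> y" "0 \<le> z"
    by (simp_all add: a_def y_def z_def entry_norm_nonneg)
  have R: "Y - pattern_remainder Z \<in> carrier_mat n n"
    using Y by (simp add: minus_carrier_mat)
  have "entry_norm (Y - pattern_remainder Z) \<le> y + 2 * a * z ^ 2"
    using entry_norm_diff[OF Y pattern_remainder_carrier[of Z]] entry_norm_pattern_remainder[OF Z(1)]
    unfolding y_def a_def z_def by linarith
  then have "2 * a * c * entry_norm (Y - pattern_remainder Z) \<le> 2 * a * c * (y + 2 * a * z ^ 2)"
    using nonneg c_nonneg by (intro mult_left_mono) auto
  then have "entry_norm (commutator A (\<Psi> (Y - pattern_remainder Z))) \<le> 2 * a * c * (y + 2 * a * z ^ 2)"
    using entry_norm_commutator_\<Psi>[OF R] unfolding a_def by linarith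
  then have "entry_norm (correction_step Y Z) \<le> 2 * a * c * (y + 2 * a * z ^ 2) + z ^ 2 / 2"
    using entry_norm_add[of "commutator A (\<Psi> (Y - pattern_remainder Z))" n n "orth_sym Z"]
      entry_norm_orth_sym[OF Z(1)] A_carrier linear_mat_map_carrier[OF linear_\<Psi> R] Z(1)
    unfolding correction_step_def z_def by simp
  also have "\<dots> = 2 * a * c * y + (16 * c * a ^ 2 + 2) * z ^ 2 / 4"
    by (simp add: algebra_simps power2_eq_square)
  also have "\<dots> \<le> r / 2 + r / 4"
  proof (rule add_mono)
    show "2 * a * c * y \<le> r / 2"
      using Y_small by (simp add: a_def y_def algebra_simps)
    have "z ^ 2 \<le> r * r"
      using Z(2) nonneg by (simp add: power2_eq_square z_def mult_mono)
    then have "(16 * c * a ^ 2 + 2) * z ^ 2 \<le> (16 * c * a ^ 2 + 2) * (r * r)"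
      using c_nonneg by (intro mult_left_mono) auto
    also have "\<dots> \<le> r"
      using mult_right_mono[OF r(2) r(1)] by (simp add: a_def mult.commute mult.left_commute)
    finally show "(16 * c * a ^ 2 + 2) * z ^ 2 / 4 \<le> r / 4"
      by simp
  qed
  finally show ?thesis
    using r(1) by simp
qed

lemma correction_step_contraction:
  assumes Y: "Y \<in> carrier_mat n n" and r: "0 \<le> r" "r * (16 * c * entry_norm A ^ 2 + 2) \<le> 1"
    and Z1: "Z1 \<in> carrier_mat n n" "entry_norm Z1 \<le> r" and Z2: "Z2 \<in> carrier_mat n n" "entry_norm Z2 \<le> r"
  shows "entry_norm (correction_step Y Z1 - correction_step Y Z2) \<le> 1/2 * entry_norm (Z1 - Z2)"
proof -
  define a d where "a = entry_norm A" and "d = entry_norm (Z1 - Z2)"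
  define R1 R2 where "R1 = Y - pattern_remainder Z1" and "R2 = Y - pattern_remainder Z2"
  have nonneg: "0 \<le> a" "0 \<le> d"
    by (simp_all add: a_def d_def entry_norm_nonneg)
  have R: "R1 \<in> carrier_mat n n" "R2 \<in> carrier_mat n n"
    using Y by (simp_all add: R1_def R2_def minus_carrier_mat)
  have dR: "entry_norm (R1 - R2) \<le> 4 * a * r * d"
  proof -
    have "entry_norm (R1 - R2) = entry_norm (pattern_remainder Z1 - pattern_remainder Z2)"
      unfolding R1_def R2_def using Y by (simp add: entry_norm_diff_cancel_left)
    also have "\<dots> \<le> 2 * a * (entry_norm Z1 + entry_norm Z2) * d"
      using entry_norm_pattern_remainder_diff[OF Z1(1) Z2(1)] by (simp add: a_def d_def)
    also have "\<dots> \<le> 2 * a * (r + r) * d"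
      using Z1(2) Z2(2) nonneg by (intro mult_right_mono mult_left_mono) auto
    finally show ?thesis
      by (simp add: algebra_simps)
  qed
  have "entry_norm (commutator A (\<Psi> R1) - commutator A (\<Psi> R2)) \<le> 2 * a * c * entry_norm (R1 - R2)"
    using commutator_\<Psi>_diff[OF R] entry_norm_commutator_\<Psi>[of "R1 - R2"] R
    by (simp add: minus_carrier_mat a_def)
  also have "\<dots> \<le> 2 * a * c * (4 * a * r * d)"
    using dR nonneg c_nonneg by (intro mult_left_mono) auto
  finally have "entry_norm (commutator A (\<Psi> R1) - commutator A (\<Psi> R2)) \<le> 2 * a * c * (4 * a * r * d)" .
  moreover have "entry_norm (orth_sym Z1 - orth_sym Z2) \<le> r * d"
  proof -
    have "(entry_norm Z1 + entry_norm Z2) / 2 * d \<le> r * d"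
      using Z1(2) Z2(2) nonneg(2) by (intro mult_right_mono) auto
    then show ?thesis
      using entry_norm_orth_sym_diff[OF Z1(1) Z2(1)] by (simp add: d_def)
  qed
  ultimately have "entry_norm (correction_step Y Z1 - correction_step Y Z2) \<le> 2 * a * c * (4 * a * r * d) + r * d"
    using entry_norm_add_diff[of "commutator A (\<Psi> R1)" n n "commutator A (\<Psi> R2)" "orth_sym Z1" "orth_sym Z2"]
      A_carrier linear_mat_map_carrier[OF linear_\<Psi>] R Z1(1) Z2(1)
    unfolding correction_step_def R1_def[symmetric] R2_def[symmetric] by simp
  also have "\<dots> = r * (16 * c * a ^ 2 + 2) * d / 2"
    by (simp add: algebra_simps power2_eq_square)
  also have "\<dots> \<le> d / 2"
    using mult_right_mono[OF r(2) nonneg(2)] by (simp add: a_def)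
  finally show ?thesis
    by (simp add: d_def)
qed

lemma fixpoint_correction_step:
  assumes Y: "Y \<in> carrier_mat n n" "sym_off_pattern n H Y = Y"
    and Z: "Z \<in> carrier_mat n n" and fixed: "correction_step Y Z = Z"
  shows "transpose_mat (1\<^sub>m n + Z) * (1\<^sub>m n + Z) = 1\<^sub>m n"
    and "off_pattern n H ((1\<^sub>m n + Z) * A * transpose_mat (1\<^sub>m n + Z) - A) = Y"
proof -
  define W where "W = \<Psi> (Y - pattern_remainder Z)"
  have RY: "Y - pattern_remainder Z \<in> carrier_mat n n"
    "sym_off_pattern n H (Y - pattern_remainder Z) = Y - pattern_remainder Z"
    using Y sym_off_pattern_pattern_remainder[OF Z]
    by (simp_all add: minus_carrier_mat linear_mat_map_diff[OF linear_sym_off_pattern])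
  have W_fixed: "sym_off_pattern n H W = W" and ssp_W: "ssp_operator n H A W = Y - pattern_remainder Z"
    using \<Psi>_test_matrix[OF RY] by (simp_all add: W_def)
  have W: "W \<in> carrier_mat n n" "transpose_mat W = W"
    using linear_mat_map_carrier[OF linear_\<Psi> RY(1)] sym_off_pattern_eq_iff[OF symp_H] W_fixed
    by (auto simp: W_def)
  have decomp: "Z = commutator A W + orth_sym Z"
    using fixed by (simp add: correction_step_def W_def)
  show "transpose_mat (1\<^sub>m n + Z) * (1\<^sub>m n + Z) = 1\<^sub>m n"
    using Z commutator_carrier[OF A_carrier W(1)] transpose_commutator_sym[OF A_carrier A_sym W] decomp
    by (rule orthogonal_if_skew_plus_orth_sym)
  have "off_pattern n H ((1\<^sub>m n + Z) * A * transpose_mat (1\<^sub>m n + Z) - A)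
      = (Y - pattern_remainder Z) + pattern_remainder Z"
    unfolding conj_minus_expansion[OF Z A_carrier] off_pattern_conj_expansion[OF A_carrier A_sym W Z decomp] ssp_W
    by (simp add: pattern_remainder_def)
  also have "\<dots> = Y"
    using Y(1) carrier_matD[OF pattern_remainder_carrier[of Z]] by (intro eq_matI) auto
  finally show "off_pattern n H ((1\<^sub>m n + Z) * A * transpose_mat (1\<^sub>m n + Z) - A) = Y" .
qed

lemma orthogonal_conj_with_off_pattern:
  assumes Y: "Y \<in> carrier_mat n n" "sym_off_pattern n H Y = Y"
    and r: "0 \<le> r" "r * (16 * c * entry_norm A ^ 2 + 2) \<le> 1"
    and Y_small: "4 * c * entry_norm A * entry_norm Y \<le> r"
  obtains Q where "Q \<in> carrier_mat n n" "transpose_mat Q * Q = 1\<^sub>m n"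
    "entry_norm (Q * A * transpose_mat Q - A) \<le> entry_norm A * r * (2 + r)"
    "off_pattern n H (Q * A * transpose_mat Q - A) = Y"
proof -
  obtain Z where Z: "Z \<in> carrier_mat n n" "entry_norm Z \<le> r" and fixed: "correction_step Y Z = Z"
    using contraction_fixpoint_entry_norm_ball[of r "1/2" n n "correction_step Y"] r
      correction_step_carrier[OF Y(1)] entry_norm_correction_step[OF Y(1) r Y_small]
      correction_step_contraction[OF Y(1) r]
    by auto
  have "entry_norm A * entry_norm Z * (2 + entry_norm Z) \<le> entry_norm A * r * (2 + r)"
    using Z(2) entry_norm_nonneg[of A] entry_norm_nonneg[of Z] r(1) by (intro mult_mono mult_left_mono) auto
  then have "entry_norm ((1\<^sub>m n + Z) * A * transpose_mat (1\<^sub>m n + Z) - A) \<le> entry_norm A * r * (2 + r)"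
    using entry_norm_conj_minus[OF Z(1) A_carrier] by linarith
  then show ?thesis
    using that[of "1\<^sub>m n + Z"] fixpoint_correction_step[OF Y Z(1) fixed] Z(1) by simp
qed

lemma local_surjectivity:
  assumes "0 < \<delta>"
  obtains \<eta> where "0 < \<eta>"
    and "\<And>Y. Y \<in> carrier_mat n n \<Longrightarrow> sym_off_pattern n H Y = Y \<Longrightarrow> entry_norm Y \<le> \<eta> \<Longrightarrow>
      \<exists>Q \<in> carrier_mat n n. transpose_mat Q * Q = 1\<^sub>m n \<and> entry_norm (Q * A * transpose_mat Q - A) \<le> \<delta>
        \<and> off_pattern n H (Q * A * transpose_mat Q - A) = Y"
proof -
  define a \<kappa> where "a = entry_norm A" and "\<kappa> = 16 * c * a ^ 2 + 2"
  have "((\<lambda>r. r * \<kappa>) \<longlongrightarrow> 0 * \<kappa>) (at_right 0)" "((\<lambda>r. a * r * (2 + r)) \<longlongrightarrow> a * 0 * (2 + 0)) (at_right 0)"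
    by (intro tendsto_intros)+
  then have "\<forall>\<^sub>F r in at_right 0. 0 < r \<and> r * \<kappa> < 1 \<and> a * r * (2 + r) < \<delta>"
    using eventually_at_right_less[of "0::real"] order_tendstoD(2) \<open>0 < \<delta>\<close>
    by (auto simp: eventually_conj_iff)
  then obtain r where r: "0 < r" "r * \<kappa> < 1" "a * r * (2 + r) < \<delta>"
    using eventually_happens'[OF trivial_limit_at_right_real] by blast
  have ca: "0 \<le> c * a"
    using c_nonneg by (simp add: a_def entry_norm_nonneg)
  show ?thesis
  proof (rule that)
    show "0 < r / (4 * c * a + 1)"
      using r ca by (intro divide_pos_pos) auto
    fix Y assume Y: "Y \<in> carrier_mat n n" "sym_off_pattern n H Y = Y"
      and Y_small: "entry_norm Y \<le> r / (4 * c * a + 1)"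
    have "4 * c * a * entry_norm Y \<le> 4 * c * a * (r / (4 * c * a + 1))"
      using Y_small ca by (intro mult_left_mono) (auto simp: mult.commute)
    also have "\<dots> \<le> r"
      using r ca by (simp add: field_simps)
    finally obtain Q where "Q \<in> carrier_mat n n" "transpose_mat Q * Q = 1\<^sub>m n"
      "entry_norm (Q * A * transpose_mat Q - A) \<le> a * r * (2 + r)"
      "off_pattern n H (Q * A * transpose_mat Q - A) = Y"
      using orthogonal_conj_with_off_pattern[OF Y, of r] r unfolding a_def \<kappa>_def by auto
    then show "\<exists>Q \<in> carrier_mat n n. transpose_mat Q * Q = 1\<^sub>m n \<and> entry_norm (Q * A * transpose_mat Q - A) \<le> \<delta>
        \<and> off_pattern n H (Q * A * transpose_mat Q - A) = Y"
      using r(3) by auto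
  qed
qed

lemma isospectral_perturbation:
  assumes "0 < \<delta>"
  obtains \<eta> where "0 < \<eta>"
    and "\<And>Y. Y \<in> carrier_mat n n \<Longrightarrow> sym_off_pattern n H Y = Y \<Longrightarrow> entry_norm Y \<le> \<eta> \<Longrightarrow>
      \<exists>A'. A' \<in> carrier_mat n n \<and> transpose_mat A' = A' \<and> spec A' = spec A \<and> entry_norm (A - A') \<le> \<delta>
        \<and> SSP_wrt n A' H \<and> off_pattern n H (A' - A) = Y"
proof -
  define \<delta>' where "\<delta>' = min \<delta> (1 / (8 * c * entry_norm A + 1))"
  have ca: "0 \<le> c * entry_norm A"
    using c_nonneg entry_norm_nonneg[of A] by simp
  have \<delta>': "0 < \<delta>'" "\<delta>' \<le> \<delta>" "4 * c * entry_norm A * \<delta>' < 1"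
    using \<open>0 < \<delta>\<close> ca by (auto simp: \<delta>'_def min_def field_simps)
  obtain \<eta> where "0 < \<eta>" and surj: "\<And>Y. Y \<in> carrier_mat n n \<Longrightarrow> sym_off_pattern n H Y = Y \<Longrightarrow>
      entry_norm Y \<le> \<eta> \<Longrightarrow> \<exists>Q \<in> carrier_mat n n. transpose_mat Q * Q = 1\<^sub>m n
        \<and> entry_norm (Q * A * transpose_mat Q - A) \<le> \<delta>' \<and> off_pattern n H (Q * A * transpose_mat Q - A) = Y"
    using local_surjectivity[OF \<delta>'(1)] by blast
  show ?thesis
  proof (rule that[OF \<open>0 < \<eta>\<close>])
    fix Y assume "Y \<in> carrier_mat n n" "sym_off_pattern n H Y = Y" "entry_norm Y \<le> \<eta>"
    then obtain Q where Q: "Q \<in> carrier_mat n n" "transpose_mat Q * Q = 1\<^sub>m n"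
      and close: "entry_norm (Q * A * transpose_mat Q - A) \<le> \<delta>'"
      and off: "off_pattern n H (Q * A * transpose_mat Q - A) = Y"
      using surj by blast
    define A' where "A' = Q * A * transpose_mat Q"
    have A': "A' \<in> carrier_mat n n" "transpose_mat A' = A'"
      using Q A_carrier A_sym by (simp_all add: A'_def transpose_mult[of _ n n _ n])
    have dist: "entry_norm (A - A') \<le> \<delta>'"
      using close entry_norm_commute[OF A_carrier A'(1)] by (simp add: A'_def)
    have "4 * c * entry_norm A * entry_norm (A - A') \<le> 4 * c * entry_norm A * \<delta>'"
      using dist ca by (intro mult_left_mono) auto
    then have "SSP_wrt n A' H"
      using SSP_wrt_near[OF A'(1)] \<delta>'(3) by linarith
    then show "\<exists>A'. A' \<in> carrier_mat n n \<and> transpose_mat A' = A' \<and> spec A' = spec A \<and> entry_norm (A - A') \<le> \<delta>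
        \<and> SSP_wrt n A' H \<and> off_pattern n H (A' - A) = Y"
      using A' dist \<delta>'(2) off spec_orthogonal_conj[OF Q(1) A_carrier Q(2)] unfolding A'_def by auto
  qed
qed

end

theorem theorem3p4:
  fixes n :: nat and G H H' :: "nat \<Rightarrow> nat \<Rightarrow> bool" and A :: "real mat"
    and N :: "real mat \<Rightarrow> real"
  assumes "graph_on n G" and "graph_on n H" and "graph_on n H'"
    and "edge_subset G H" and "edge_subset H H'"
    and "A \<in> S_pattern n G"
    and "SSP_wrt n A H"
    and "matrix_norm n N"
  shows "\<forall>\<epsilon>>0. \<exists>A'. A' \<in> S_cl n H' \<and> spec A' = spec A \<and> N (A - A') < \<epsilon>
           \<and> SSP_wrt n A' H'
           \<and> (\<forall>i<n. \<forall>j<n. H' i j \<and> \<not> H i j \<longrightarrow> A' $$ (i,j) \<noteq> 0)"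
proof (intro allI impI)
  fix \<epsilon> :: real assume "0 < \<epsilon>"
  have H: "symp H"
    using assms(2) by (auto simp: graph_on_def symp_def)
  have A: "A \<in> carrier_mat n n" "transpose_mat A = A"
    using assms(6) by (auto simp: S_pattern_def sym_mats_def)
  obtain \<Psi> c where inv: "ssp_inverse n H A \<Psi> c"
    using ssp_inverse_exists[OF H A assms(7)] .
  obtain \<delta> where "0 < \<delta>" and small: "\<And>X. X \<in> carrier_mat n n \<Longrightarrow> entry_norm X \<le> \<delta> \<Longrightarrow> N X < \<epsilon>"
    using matrix_norm_small[OF assms(8) \<open>0 < \<epsilon>\<close>] by blast
  obtain \<eta> where "0 < \<eta>" and perturb: "\<And>Y. Y \<in> carrier_mat n n \<Longrightarrow> sym_off_pattern n H Y = Y \<Longrightarrow>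
      entry_norm Y \<le> \<eta> \<Longrightarrow> \<exists>A'. A' \<in> carrier_mat n n \<and> transpose_mat A' = A' \<and> spec A' = spec A
        \<and> entry_norm (A - A') \<le> \<delta> \<and> SSP_wrt n A' H \<and> off_pattern n H (A' - A) = Y"
    using ssp_inverse.isospectral_perturbation[OF inv \<open>0 < \<delta>\<close>] by blast
  define t where "t = \<eta> / (entry_norm (new_edge_mat n H H') + 1)"
  have t: "0 < t" "entry_norm (t \<cdot>\<^sub>m new_edge_mat n H H') \<le> \<eta>"
    using \<open>0 < \<eta>\<close> entry_norm_nonneg[of "new_edge_mat n H H'"] by (auto simp: t_def field_simps)
  obtain A' where A': "A' \<in> carrier_mat n n" "transpose_mat A' = A'" "spec A' = spec A"
    and close: "entry_norm (A - A') \<le> \<delta>" and ssp: "SSP_wrt n A' H"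
    and off: "off_pattern n H (A' - A) = t \<cdot>\<^sub>m new_edge_mat n H H'"
    using perturb[of "t \<cdot>\<^sub>m new_edge_mat n H H'"] t
      linear_mat_map_smult[OF linear_sym_off_pattern] sym_off_pattern_new_edge_mat[OF assms(3) H]
    by auto
  show "\<exists>A'. A' \<in> S_cl n H' \<and> spec A' = spec A \<and> N (A - A') < \<epsilon> \<and> SSP_wrt n A' H'
      \<and> (\<forall>i<n. \<forall>j<n. H' i j \<and> \<not> H i j \<longrightarrow> A' $$ (i,j) \<noteq> 0)"
    using S_cl_if_off_pattern_diff_new_edges[OF assms(3,5) A(1) off_pattern_S_pattern[OF assms(6,4)] A'(1,2) off]
      t(1) A'(3) SSP_wrt_mono[OF assms(5) ssp] small[of "A - A'"] close A(1) A'(1)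
    by (auto simp: minus_carrier_mat)
qed

end
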